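(* Let $n\ge 1$ and let $(\phi_1^{k},\phi_2^{k})\in\vec{\mathcal C}^{\mathcal G}_{\rm per}$ for $k=n-1,n$, with $\overline{\phi_i^{n-1}}=\overline{\phi_i^{n}}$ for $i=1,2$. Then, for every $\Delta t>0$, $h>0$ and constants $A_1,A_2\ge0$, there exists a unique $(\phi_1^{n+1},\phi_2^{n+1})\in\vec{\mathcal C}^{\mathcal G}_{\rm per}$ solving the BDF2 scheme at step $n+1$, and it satisfies $\overline{\phi_i^{n+1}}=\overline{\phi_i^{n}}$ for $i=1,2$. In particular, at every grid point, $\phi_1^{n+1}>0$, $\phi_2^{n+1}>0$ and $\phi_1^{n+1}+\phi_2^{n+1}<1$.
   Context: Discrete setting. Fix $L>0$, $N\in\mathbb N$, $h=L/N$, $\Omega=(0,L)^2$. $\mathcal C_{\rm per}$ is the space of real grid functions $\nu=(\nu_{i,j})_{i,j\in\mathbb Z}$ with $\nu_{i+aN,j+bN}=\nu_{i,j}$ for all integers $i,j,a,b$ ($\nu_{i,j}$ is the value at the cell centre $((i-\tfrac12)h,(j-\tfrac12)h)$); periodic face-centred functions are indexed by $(i+\frac12,j)$ (east-west faces) or $(i,j+\frac12)$ (north-south faces). Define $(A_x\nu)_{i+\frac12,j}=\tfrac12(\nu_{i+1,j}+\nu_{i,j})$, $(D_x\nu)_{i+\frac12,j}=\tfrac1h(\nu_{i+1,j}-\nu_{i,j})$, and for east-west face functions $f$, $(a_xf)_{i,j}=\tfrac12(f_{i+\frac12,j}+f_{i-\frac12,j})$, $(d_xf)_{i,j}=\tfrac1h(f_{i+\frac12,j}-f_{i-\frac12,j})$;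 $A_y,D_y,a_y,d_y$ are defined analogously in the second index. $\nabla_h\nu=(D_x\nu,D_y\nu)$, $\nabla_h\cdot(f^x,f^y)=d_xf^x+d_yf^y$, $\Delta_h\nu=d_x(D_x\nu)+d_y(D_y\nu)$ (the 5-point Laplacian). For $\nu,\xi\in\mathcal C_{\rm per}$: $\langle\nu,\xi\rangle=h^2\sum_{i,j=1}^N\nu_{i,j}\xi_{i,j}$, $\|\nu\|_2=\langle\nu,\nu\rangle^{1/2}$, $\|\nu\|_\infty=\max_{1\le i,j\le N}|\nu_{i,j}|$, $\|\nabla_h\nu\|_2^2=\langle a_x((D_x\nu)^2)+a_y((D_y\nu)^2),1\rangle$, $\overline{\nu}=|\Omega|^{-1}\langle\nu,1\rangle$. For $\overline\nu=0$, $(-\Delta_h)^{-1}\nu$ denotes the unique mean-zero $\psi\in\mathcal C_{\rm per}$ with $-\Delta_h\psi=\nu$; for mean-zero $\nu,\xi$, $\langle\nu,\xi\rangle_{-1,h}=\langle\nu,(-\Delta_h)^{-1}\xi\rangle$ and $\|\nu\|_{-1,h}=\langle\nu,\nu\rangle_{-1,h}^{1/2}$. Functions of grid functions (products, quotients, $\ln$) act pointwise. Model. $M_0,N_0>0$, $\alpha=\pi((M_0/\pi)^{1/2}+N_0/2)^2$, $\beta=2(M_0/\pi)^{1/2}+N_0$; $\varepsilon_1,\varepsilon_2,\varepsilon_3>0$; $\chi_{12},\chi_{13},\chi_{23}>0$ with $4\chi_{13}\chi_{23}-(\chi_{12}-\chi_{13}-\chi_{23})^2>0$; mobilities $\mathcal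 M_1,\mathcal M_2>0$. For $a,b>0$, $a+b<1$: $S(a,b)=\frac{a}{M_0}\ln\frac{\alpha a}{M_0}+\frac{b}{N_0}\ln\frac{\beta b}{N_0}+(1-a-b)\ln(1-a-b)$, $H(a,b)=\chi_{12}ab+\chi_{13}a(1-a-b)+\chi_{23}b(1-a-b)$; thus $\partial_aS=\frac1{M_0}\ln\frac{\alpha a}{M_0}+\frac1{M_0}-\ln(1-a-b)-1$, $\partial_bS=\frac1{N_0}\ln\frac{\beta b}{N_0}+\frac1{N_0}-\ln(1-a-b)-1$, $\partial_aH=\chi_{13}-2\chi_{13}a+(\chi_{12}-\chi_{13}-\chi_{23})b$, $\partial_bH=\chi_{23}-2\chi_{23}b+(\chi_{12}-\chi_{13}-\chi_{23})a$. $\kappa(s)=1/(36s)$. The Gibbs triangle is $\mathcal G=\{(a,b):a>0,b>0,a+b<1\}$, and $\vec{\mathcal C}^{\mathcal G}_{\rm per}$ is the set of pairs $(\phi_1,\phi_2)\in\mathcal C_{\rm per}^2$ with $((\phi_1)_{i,j},(\phi_2)_{i,j})\in\mathcal G$ for all $i,j$. For such a pair set $u_1=\phi_1$, $u_2=\phi_2$, $u_3=1-\phi_1-\phi_2$ and, for $k=1,2,3$, $T_k(\phi_1,\phi_2)=a_x(\kappa'(A_xu_k)(D_xu_k)^2)-2d_x(\kappa(A_xu_k)D_xu_k)+a_y(\kappa'(A_yu_k)(D_yu_k)^2)-2d_y(\kappa(A_yu_k)D_yu_k)$. Discrete energy: $G_h(\phi_1,\phi_2)=\langle S(\phi_1,\phi_2)+H(\phi_1,\phi_2),1\rangle+\sum_{k=1}^3\varepsilon_k^2\langle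 a_x(\kappa(A_xu_k)(D_xu_k)^2)+a_y(\kappa(A_yu_k)(D_yu_k)^2),1\rangle$. Convex-part derivatives: $\delta_{\phi_1}G_{h,c}(\phi_1,\phi_2)=\partial_aS(\phi_1,\phi_2)+\varepsilon_1^2T_1-\varepsilon_3^2T_3$, $\delta_{\phi_2}G_{h,c}(\phi_1,\phi_2)=\partial_bS(\phi_1,\phi_2)+\varepsilon_2^2T_2-\varepsilon_3^2T_3$. BDF2 scheme. Fix $\Delta t>0$ and constants $A_1,A_2\ge0$. For $n\ge1$, given $(\phi_1^{k},\phi_2^{k})$, $k=n-1,n$, set $\hat\phi_i^n=2\phi_i^n-\phi_i^{n-1}$. A pair $(\phi_1^{n+1},\phi_2^{n+1})\in\vec{\mathcal C}^{\mathcal G}_{\rm per}$ solves the scheme at step $n+1$ if for $i=1,2$: $\frac{3\phi_i^{n+1}-4\phi_i^n+\phi_i^{n-1}}{2\Delta t}=\mathcal M_i\Delta_h\mu_i^{n+1}$, where $\mu_1^{n+1}=\delta_{\phi_1}G_{h,c}(\phi_1^{n+1},\phi_2^{n+1})+\partial_aH(\hat\phi_1^n,\hat\phi_2^n)-A_1\Delta t\,\Delta_h(\phi_1^{n+1}-\phi_1^n)$ and $\mu_2^{n+1}=\delta_{\phi_2}G_{h,c}(\phi_1^{n+1},\phi_2^{n+1})+\partial_bH(\hat\phi_1^n,\hat\phi_2^n)-A_2\Delta t\,\Delta_h(\phi_2^{n+1}-\phi_2^n)$. *)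

theory Defs
  imports Complex_Main
begin

text \<open>An east-west face function f is stored so that f i j is its value at the face (i+1/2, j);
  a north-south face function g is stored so that g i j is its value at (i, j+1/2).\<close>

type_synonym grid = "int \<Rightarrow> int \<Rightarrow> real"

definition periodic :: "nat \<Rightarrow> grid \<Rightarrow> bool" where
  "periodic N \<nu> \<longleftrightarrow> (\<forall>i j a b :: int. \<nu> (i + a * int N) (j + b * int N) = \<nu> i j)"

definition Ax :: "grid \<Rightarrow> grid" where "Ax \<nu> = (\<lambda>i j. (\<nu> (i+1) j + \<nu> i j) / 2)"
definition Ay :: "grid \<Rightarrow> grid" where "Ay \<nu> = (\<lambda>i j. (\<nu> i (j+1) + \<nu> i j) / 2)"
definition Dx :: "real \<Rightarrow> grid \<Rightarrow> grid" where "Dx h \<nu> = (\<lambda>i j. (\<nu> (i+1) j - \<nu> i j) / h)"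
definition Dy :: "real \<Rightarrow> grid \<Rightarrow> grid" where "Dy h \<nu> = (\<lambda>i j. (\<nu> i (j+1) - \<nu> i j) / h)"
definition ax :: "grid \<Rightarrow> grid" where "ax f = (\<lambda>i j. (f i j + f (i-1) j) / 2)"
definition ay :: "grid \<Rightarrow> grid" where "ay f = (\<lambda>i j. (f i j + f i (j-1)) / 2)"
definition dx :: "real \<Rightarrow> grid \<Rightarrow> grid" where "dx h f = (\<lambda>i j. (f i j - f (i-1) j) / h)"
definition dy :: "real \<Rightarrow> grid \<Rightarrow> grid" where "dy h f = (\<lambda>i j. (f i j - f i (j-1)) / h)"

definition lap :: "real \<Rightarrow> grid \<Rightarrow> grid" where
  "lap h \<nu> = (\<lambda>i j. dx h (Dx h \<nu>) i j + dy h (Dy h \<nu>) i j)"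

text \<open>Discrete mean over Omega = (0,L)^2 with h = L/N.\<close>
definition gmean :: "real \<Rightarrow> nat \<Rightarrow> grid \<Rightarrow> real" where
  "gmean L N \<nu> = (1 / L\<^sup>2) * ((L / real N)\<^sup>2 * (\<Sum>i\<in>{1..int N}. \<Sum>j\<in>{1..int N}. \<nu> i j))"

definition inGibbs :: "nat \<Rightarrow> grid \<Rightarrow> grid \<Rightarrow> bool" where
  "inGibbs N \<phi>1 \<phi>2 \<longleftrightarrow> periodic N \<phi>1 \<and> periodic N \<phi>2 \<and>
     (\<forall>i j. 0 < \<phi>1 i j \<and> 0 < \<phi>2 i j \<and> \<phi>1 i j + \<phi>2 i j < 1)"

record model =
  M0 :: real  N0 :: real
  eps1 :: real  eps2 :: real  eps3 :: real
  chi12 :: real  chi13 :: real  chi23 :: real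
  mob1 :: real  mob2 :: real

definition valid_model :: "model \<Rightarrow> bool" where
  "valid_model P \<longleftrightarrow> M0 P > 0 \<and> N0 P > 0 \<and> eps1 P > 0 \<and> eps2 P > 0 \<and> eps3 P > 0 \<and>
     chi12 P > 0 \<and> chi13 P > 0 \<and> chi23 P > 0 \<and>
     4 * chi13 P * chi23 P - (chi12 P - chi13 P - chi23 P)\<^sup>2 > 0 \<and>
     mob1 P > 0 \<and> mob2 P > 0"

definition alpha :: "model \<Rightarrow> real" where
  "alpha P = pi * (sqrt (M0 P / pi) + N0 P / 2)\<^sup>2"
definition beta :: "model \<Rightarrow> real" where
  "beta P = 2 * sqrt (M0 P / pi) + N0 P"

definition dSa :: "model \<Rightarrow> real \<Rightarrow> real \<Rightarrow> real" where
  "dSa P a b = 1 / M0 P * ln (alpha P * a / M0 P) + 1 / M0 P - ln (1 - a - b) - 1"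
definition dSb :: "model \<Rightarrow> real \<Rightarrow> real \<Rightarrow> real" where
  "dSb P a b = 1 / N0 P * ln (beta P * b / N0 P) + 1 / N0 P - ln (1 - a - b) - 1"
definition dHa :: "model \<Rightarrow> real \<Rightarrow> real \<Rightarrow> real" where
  "dHa P a b = chi13 P - 2 * chi13 P * a + (chi12 P - chi13 P - chi23 P) * b"
definition dHb :: "model \<Rightarrow> real \<Rightarrow> real \<Rightarrow> real" where
  "dHb P a b = chi23 P - 2 * chi23 P * b + (chi12 P - chi13 P - chi23 P) * a"

definition kappa :: "real \<Rightarrow> real" where "kappa s = 1 / (36 * s)"
definition kappa' :: "real \<Rightarrow> real" where "kappa' s = - 1 / (36 * s\<^sup>2)"

definition Top :: "real \<Rightarrow> grid \<Rightarrow> grid" where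
  "Top h u = (\<lambda>i j.
      ax (\<lambda>i j. kappa' (Ax u i j) * (Dx h u i j)\<^sup>2) i j
    - 2 * dx h (\<lambda>i j. kappa (Ax u i j) * Dx h u i j) i j
    + ay (\<lambda>i j. kappa' (Ay u i j) * (Dy h u i j)\<^sup>2) i j
    - 2 * dy h (\<lambda>i j. kappa (Ay u i j) * Dy h u i j) i j)"

definition dG1 :: "model \<Rightarrow> real \<Rightarrow> grid \<Rightarrow> grid \<Rightarrow> grid" where
  "dG1 P h \<phi>1 \<phi>2 = (\<lambda>i j. dSa P (\<phi>1 i j) (\<phi>2 i j) + (eps1 P)\<^sup>2 * Top h \<phi>1 i j
      - (eps3 P)\<^sup>2 * Top h (\<lambda>i j. 1 - \<phi>1 i j - \<phi>2 i j) i j)"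
definition dG2 :: "model \<Rightarrow> real \<Rightarrow> grid \<Rightarrow> grid \<Rightarrow> grid" where
  "dG2 P h \<phi>1 \<phi>2 = (\<lambda>i j. dSb P (\<phi>1 i j) (\<phi>2 i j) + (eps2 P)\<^sup>2 * Top h \<phi>2 i j
      - (eps3 P)\<^sup>2 * Top h (\<lambda>i j. 1 - \<phi>1 i j - \<phi>2 i j) i j)"

text \<open>The BDF2 scheme at step n+1: given (p1o,p2o) = step n-1 and (p1c,p2c) = step n,
  (q1,q2) is the candidate for step n+1.\<close>
definition bdf2_step :: "model \<Rightarrow> real \<Rightarrow> real \<Rightarrow> real \<Rightarrow> real \<Rightarrow>
    grid \<Rightarrow> grid \<Rightarrow> grid \<Rightarrow> grid \<Rightarrow> grid \<Rightarrow> grid \<Rightarrow> bool" where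
  "bdf2_step P h dt A1 A2 p1o p2o p1c p2c q1 q2 \<longleftrightarrow>
    (let h1 = (\<lambda>i j. 2 * p1c i j - p1o i j);
         h2 = (\<lambda>i j. 2 * p2c i j - p2o i j);
         mu1 = (\<lambda>i j. dG1 P h q1 q2 i j + dHa P (h1 i j) (h2 i j)
                  - A1 * dt * lap h (\<lambda>i j. q1 i j - p1c i j) i j);
         mu2 = (\<lambda>i j. dG2 P h q1 q2 i j + dHb P (h1 i j) (h2 i j)
                  - A2 * dt * lap h (\<lambda>i j. q2 i j - p2c i j) i j)
     in (\<forall>i j. (3 * q1 i j - 4 * p1c i j + p1o i j) / (2 * dt) = mob1 P * lap h mu1 i j) \<and>
        (\<forall>i j. (3 * q2 i j - 4 * p2c i j + p2o i j) / (2 * dt) = mob2 P * lap h mu2 i j))"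

end

theory Submission
  imports Defs "HOL-Analysis.Analysis"
begin

text \<open>Writing \<open>\<phi>\<^sub>i = \<phi>\<^sub>i\<^sup>n + \<Delta>\<^sub>h w\<^sub>i\<close>, the scheme becomes the Euler--Lagrange
  equation of a functional \<open>J(w\<^sub>1, w\<^sub>2)\<close>. We minimise \<open>J\<close> over the pairs whose three phase
  fractions \<open>\<phi>\<^sub>1, \<phi>\<^sub>2, 1 - \<phi>\<^sub>1 - \<phi>\<^sub>2\<close> are all at least \<open>\<delta>\<close>; after normalising
  \<open>w(1, 1) = 0\<close> this set is compact, since \<open>\<Delta>\<^sub>h w\<close> is bounded on it. For small \<open>\<delta>\<close> the
  minimiser does not touch the constraint: where one phase is \<open>\<le> \<delta>\<close> another one is
  \<open>\<ge> 1/4\<close>, and moving mass between these two phases there, compensated at a cell where the first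
  phase is at least its mean, lowers \<open>J\<close> at a rate \<open>ln \<delta> - ln (mean) + O(1)\<close>: the logarithmic part
  of the entropy is singular at \<open>0\<close>, while on a fixed grid every other term of the chemical
  potential is bounded. So the minimiser is an interior critical point, i.e. a solution.

  Uniqueness: the chemical potential is monotone (strictly in its entropy part, by a per-face
  identity in its gradient part), whereas for two solutions \<open>q, r\<close> the scheme forces
  \<open>\<langle>q - r, \<mu>(q) - \<mu>(r)\<rangle> = -\<kappa> \<parallel>\<nabla>\<^sub>h (\<mu>(q) - \<mu>(r))\<parallel>\<^sup>2 \<le> 0\<close>. Mass is conserved because
  a discrete Laplacian sums to zero.\<close>

lemma periodic_multiple_shift:
  fixes g :: "int \<Rightarrow> real"
  assumes "\<And>k. g (k + int N) = g k"
  shows "g (k + a * int N) = g k"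
proof (induct a rule: int_induct[where k=0])
  case base then show ?case by simp
next
  case (step1 i)
  have "g (k + (i + 1) * int N) = g ((k + i * int N) + int N)" by (simp add: algebra_simps)
  also have "\<dots> = g (k + i * int N)" by (rule assms)
  finally show ?case using step1 by simp
next
  case (step2 i)
  have "g (k + i * int N) = g ((k + (i - 1) * int N) + int N)" by (simp add: algebra_simps)
  also have "\<dots> = g (k + (i - 1) * int N)" by (rule assms)
  finally show ?case using step2 by simp
qed

lemma periodic_iff_shift:
  "periodic N f \<longleftrightarrow> (\<forall>i j. f (i + int N) j = f i j \<and> f i (j + int N) = f i j)"
proof
  assume "periodic N f"
  then show "\<forall>i j. f (i + int N) j = f i j \<and> f i (j + int N) = f i j"
    unfolding periodic_def by (metis add.right_neutral mult_1 mult_zero_left)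
next
  assume H: "\<forall>i j. f (i + int N) j = f i j \<and> f i (j + int N) = f i j"
  show "periodic N f" unfolding periodic_def
  proof (intro allI)
    fix i j a b :: int
    have "f (i + a * int N) (j + b * int N) = f i (j + b * int N)"
      using periodic_multiple_shift[of "\<lambda>k. f k (j + b * int N)" N i a] H by simp
    also have "\<dots> = f i j"
      using periodic_multiple_shift[of "\<lambda>k. f i k" N j b] H by simp
    finally show "f (i + a * int N) (j + b * int N) = f i j" .
  qed
qed

lemma periodicI:
  "(\<And>i j. f (i + int N) j = f i j) \<Longrightarrow> (\<And>i j. f i (j + int N) = f i j) \<Longrightarrow> periodic N f"
  by (simp add: periodic_iff_shift)

lemma periodicD_x: "periodic N f \<Longrightarrow> f (i + int N) j = f i j"
  and periodicD_y: "periodic N f \<Longrightarrow> f i (j + int N) = f i j"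
  by (simp_all add: periodic_iff_shift)

lemma periodicD_x_plus: "periodic N f \<Longrightarrow> f (i + int N + c) j = f (i + c) j"
  using periodicD_x[of N f "i + c" j] by (simp add: ac_simps)

lemma periodicD_x_minus: "periodic N f \<Longrightarrow> f (i + int N - c) j = f (i - c) j"
  using periodicD_x[of N f "i - c" j] by (simp add: algebra_simps)

lemma periodicD_y_plus: "periodic N f \<Longrightarrow> f i (j + int N + c) = f i (j + c)"
  using periodicD_y[of N f i "j + c"] by (simp add: ac_simps)

lemma periodicD_y_minus: "periodic N f \<Longrightarrow> f i (j + int N - c) = f i (j - c)"
  using periodicD_y[of N f i "j - c"] by (simp add: algebra_simps)

lemmas periodic_simps =
  periodicD_x periodicD_y periodicD_x_plus periodicD_x_minus periodicD_y_plus periodicD_y_minus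

lemma periodic_comp: "periodic N f \<Longrightarrow> periodic N (\<lambda>i j. F (f i j))"
  by (simp add: periodic_iff_shift)

lemma periodic_comp2: "periodic N f \<Longrightarrow> periodic N g \<Longrightarrow> periodic N (\<lambda>i j. G (f i j) (g i j))"
  by (simp add: periodic_iff_shift)

lemma periodic_const: "periodic N (\<lambda>i j. c)"
  by (simp add: periodic_iff_shift)

lemma periodic_add: "periodic N f \<Longrightarrow> periodic N g \<Longrightarrow> periodic N (\<lambda>i j. f i j + g i j)"
  and periodic_diff: "periodic N f \<Longrightarrow> periodic N g \<Longrightarrow> periodic N (\<lambda>i j. f i j - g i j)"
  and periodic_cmult: "periodic N f \<Longrightarrow> periodic N (\<lambda>i j. c * f i j)"
  by (fact periodic_comp2 periodic_comp)+

lemma periodic_Ax: "periodic N u \<Longrightarrow> periodic N (Ax u)"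
  by (rule periodicI) (simp_all add: Ax_def periodic_simps)

lemma periodic_Ay: "periodic N u \<Longrightarrow> periodic N (Ay u)"
  by (rule periodicI) (simp_all add: Ay_def periodic_simps)

lemma periodic_Dx: "periodic N u \<Longrightarrow> periodic N (Dx h u)"
  by (rule periodicI) (simp_all add: Dx_def periodic_simps)

lemma periodic_Dy: "periodic N u \<Longrightarrow> periodic N (Dy h u)"
  by (rule periodicI) (simp_all add: Dy_def periodic_simps)

lemma periodic_ax: "periodic N u \<Longrightarrow> periodic N (ax u)"
  by (rule periodicI) (simp_all add: ax_def periodic_simps)

lemma periodic_ay: "periodic N u \<Longrightarrow> periodic N (ay u)"
  by (rule periodicI) (simp_all add: ay_def periodic_simps)

lemma periodic_dx: "periodic N u \<Longrightarrow> periodic N (dx h u)"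
  by (rule periodicI) (simp_all add: dx_def periodic_simps)

lemma periodic_dy: "periodic N u \<Longrightarrow> periodic N (dy h u)"
  by (rule periodicI) (simp_all add: dy_def periodic_simps)

lemma periodic_lap: "periodic N u \<Longrightarrow> periodic N (lap h u)"
  unfolding lap_def by (intro periodic_add periodic_dx periodic_dy periodic_Dx periodic_Dy)

lemma periodic_face_terms:
  assumes "periodic N u"
  shows "periodic N (\<lambda>i j. kappa' (Ax u i j) * (Dx h u i j)\<^sup>2)"
    and "periodic N (\<lambda>i j. kappa (Ax u i j) * Dx h u i j)"
    and "periodic N (\<lambda>i j. kappa' (Ay u i j) * (Dy h u i j)\<^sup>2)"
    and "periodic N (\<lambda>i j. kappa (Ay u i j) * Dy h u i j)"
  by (rule periodicI; simp add: assms periodicD_x periodicD_y periodic_Ax periodic_Ay periodic_Dx periodic_Dy)+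

lemma periodic_Top: "periodic N u \<Longrightarrow> periodic N (Top h u)"
  unfolding Top_def
  by (intro periodic_add periodic_diff periodic_cmult periodic_ax periodic_ay periodic_dx periodic_dy
        periodic_face_terms)

lemma Dx_add_scaled: "Dx h (\<lambda>i j. a i j + s * b i j) i j = Dx h a i j + s * Dx h b i j"
  by (cases "h = 0") (simp_all add: Dx_def field_simps)

lemma Dy_add_scaled: "Dy h (\<lambda>i j. a i j + s * b i j) i j = Dy h a i j + s * Dy h b i j"
  by (cases "h = 0") (simp_all add: Dy_def field_simps)

lemma Ax_add_scaled: "Ax (\<lambda>i j. a i j + s * b i j) i j = Ax a i j + s * Ax b i j"
  and Ay_add_scaled: "Ay (\<lambda>i j. a i j + s * b i j) i j = Ay a i j + s * Ay b i j"
  by (simp_all add: Ax_def Ay_def field_simps)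

lemma lap_add_scaled: "lap h (\<lambda>i j. a i j + s * b i j) i j = lap h a i j + s * lap h b i j"
  by (cases "h = 0") (simp_all add: lap_def dx_def dy_def Dx_def Dy_def field_simps)

lemma lap_diff: "lap h (\<lambda>i j. f i j - g i j) i j = lap h f i j - lap h g i j"
  by (cases "h = 0") (simp_all add: lap_def dx_def dy_def Dx_def Dy_def field_simps)

lemma lap_cmult: "lap h (\<lambda>i j. c * f i j) i j = c * lap h f i j"
  unfolding lap_def dx_def dy_def Dx_def Dy_def
  by (simp add: algebra_simps diff_divide_distrib[symmetric] add_divide_distrib[symmetric])

lemma lap_diff_const: "lap h (\<lambda>i j. f i j - d) = lap h f"
  unfolding lap_def dx_def dy_def Dx_def Dy_def by simp

definition wrap :: "nat \<Rightarrow> int \<Rightarrow> int" where "wrap N x = (x - 1) mod int N + 1"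

lemma wrap_bounds: "N \<ge> 1 \<Longrightarrow> 1 \<le> wrap N x \<and> wrap N x \<le> int N"
proof -
  assume "N \<ge> 1"
  then have "0 \<le> (x - 1) mod int N" "(x - 1) mod int N < int N" by simp_all
  then show ?thesis unfolding wrap_def by simp
qed

lemma wrap_id: "1 \<le> x \<Longrightarrow> x \<le> int N \<Longrightarrow> wrap N x = x"
  unfolding wrap_def by (simp add: mod_pos_pos_trivial)

lemma wrap_shift: "wrap N (i + int N) = wrap N i"
proof -
  have "i + int N - 1 = (i - 1) + int N" by simp
  then show ?thesis by (simp only: wrap_def mod_add_self2)
qed

lemma wrap_eq: "wrap N x = x + (- ((x - 1) div int N)) * int N"
  unfolding wrap_def using div_mult_mod_eq[of "x - 1" "int N"] by linarith

lemma periodic_wrap: "periodic N f \<Longrightarrow> f (wrap N i) (wrap N j) = f i j"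
  unfolding periodic_def wrap_eq by blast

definition gsum :: "nat \<Rightarrow> grid \<Rightarrow> real" where
  "gsum N f = (\<Sum>i\<in>{1..int N}. \<Sum>j\<in>{1..int N}. f i j)"

lemma gsum_add: "gsum N (\<lambda>i j. f i j + g i j) = gsum N f + gsum N g"
  and gsum_diff: "gsum N (\<lambda>i j. f i j - g i j) = gsum N f - gsum N g"
  and gsum_cmult: "gsum N (\<lambda>i j. c * f i j) = c * gsum N f"
  and gsum_multc: "gsum N (\<lambda>i j. f i j * c) = gsum N f * c"
  and gsum_divide: "gsum N (\<lambda>i j. f i j / c) = gsum N f / c"
  and gsum_minus: "gsum N (\<lambda>i j. - f i j) = - gsum N f"
  and gsum_const: "gsum N (\<lambda>i j. c) = real N * real N * c"
  by (simp_all add: gsum_def sum.distrib sum_subtractf sum_distrib_left sum_distrib_right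
      sum_divide_distrib sum_negf)

lemmas gsum_linear = gsum_add gsum_diff gsum_cmult gsum_minus

lemma gsum_cong:
  "(\<And>i j. 1 \<le> i \<Longrightarrow> i \<le> int N \<Longrightarrow> 1 \<le> j \<Longrightarrow> j \<le> int N \<Longrightarrow> f i j = g i j) \<Longrightarrow>
    gsum N f = gsum N g"
  unfolding gsum_def by (intro sum.cong refl) auto

lemma gsum_mono:
  "(\<And>i j. 1 \<le> i \<Longrightarrow> i \<le> int N \<Longrightarrow> 1 \<le> j \<Longrightarrow> j \<le> int N \<Longrightarrow> f i j \<le> g i j) \<Longrightarrow>
    gsum N f \<le> gsum N g"
  unfolding gsum_def by (intro sum_mono) auto

lemma gsum_strict_mono:
  "N \<ge> 1 \<Longrightarrow> (\<And>i j. 1 \<le> i \<Longrightarrow> i \<le> int N \<Longrightarrow> 1 \<le> j \<Longrightarrow> j \<le> int N \<Longrightarrow> f i j < g i j) \<Longrightarrow>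
    gsum N f < gsum N g"
  unfolding gsum_def by (intro sum_strict_mono) auto

lemma gsum_nonneg:
  "(\<And>i j. 1 \<le> i \<Longrightarrow> i \<le> int N \<Longrightarrow> 1 \<le> j \<Longrightarrow> j \<le> int N \<Longrightarrow> 0 \<le> f i j) \<Longrightarrow> 0 \<le> gsum N f"
  using gsum_mono[of N "\<lambda>i j. 0" f] by (simp add: gsum_def)

lemma member_le_gsum:
  assumes "\<And>i j. 0 \<le> f i j" "1 \<le> i" "i \<le> int N" "1 \<le> j" "j \<le> int N"
  shows "f i j \<le> gsum N f"
proof -
  have "f i j \<le> (\<Sum>j\<in>{1..int N}. f i j)"
    by (rule member_le_sum) (use assms in auto)
  also have "\<dots> \<le> gsum N f" unfolding gsum_def
    by (rule member_le_sum[where f="\<lambda>i. \<Sum>j\<in>{1..int N}. f i j"])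
      (use assms in \<open>auto intro: sum_nonneg\<close>)
  finally show ?thesis .
qed

lemma exists_ge_average:
  assumes "N \<ge> 1"
  shows "\<exists>i j. 1 \<le> i \<and> i \<le> int N \<and> 1 \<le> j \<and> j \<le> int N \<and> gsum N f / (real N * real N) \<le> f i j"
proof (rule ccontr)
  let ?m = "gsum N f / (real N * real N)"
  assume "\<not> ?thesis"
  then have "gsum N f < gsum N (\<lambda>i j. ?m)" using assms by (intro gsum_strict_mono) force+
  also have "\<dots> = gsum N f" using assms by (simp add: gsum_const)
  finally show False by simp
qed

lemma gsum_ge_const: "(\<And>i j. m \<le> f i j) \<Longrightarrow> real N * real N * m \<le> gsum N f"
  using gsum_mono[of N "\<lambda>i j. m" f] by (simp add: gsum_const)

lemma gsum_mult_add_scaled: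
  "gsum N (\<lambda>i j. g i j * (w i j + s * v i j)) = gsum N (\<lambda>i j. g i j * w i j) + s * gsum N (\<lambda>i j. g i j * v i j)"
  unfolding gsum_cmult[symmetric] gsum_add[symmetric] by (simp add: algebra_simps)

lemma gmean_eq_iff_gsum_eq: "L > 0 \<Longrightarrow> N \<ge> 1 \<Longrightarrow> gmean L N f = gmean L N g \<longleftrightarrow> gsum N f = gsum N g"
  unfolding gmean_def gsum_def[symmetric] by simp

lemma sum_periodic_shift_succ:
  fixes g :: "int \<Rightarrow> real"
  assumes "\<And>k. g (k + int N) = g k"
  shows "(\<Sum>i\<in>{1..int N}. g (i + 1)) = (\<Sum>i\<in>{1..int N}. g i)"
proof (cases "N = 0")
  case False
  have "(\<Sum>i\<in>{1..int N}. g (i + 1)) = (\<Sum>i\<in>{2..int N + 1}. g i)"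
    by (rule sum.reindex_bij_witness[of _ "\<lambda>i. i - 1" "\<lambda>i. i + 1"]) auto
  also have "{2..int N + 1} = insert (1 + int N) {2..int N}" and "{1..int N} = insert 1 {2..int N}"
    using False by auto
  moreover have "g (1 + int N) = g 1" using assms[of 1] by (simp add: ac_simps)
  ultimately show ?thesis by simp
qed simp

lemma sum_periodic_shift_pred:
  fixes g :: "int \<Rightarrow> real"
  assumes "\<And>k. g (k + int N) = g k"
  shows "(\<Sum>i\<in>{1..int N}. g (i - 1)) = (\<Sum>i\<in>{1..int N}. g i)"
proof -
  have "g (k + int N - 1) = g (k - 1)" for k
    using assms[of "k - 1"] by (simp add: algebra_simps)
  then show ?thesis using sum_periodic_shift_succ[of "\<lambda>k. g (k - 1)" N] by simp
qed

lemma gsum_shift_x_pred: "periodic N f \<Longrightarrow> gsum N (\<lambda>i j. f (i - 1) j) = gsum N f"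
  unfolding gsum_def
  by (rule sum_periodic_shift_pred[of "\<lambda>i. \<Sum>j\<in>{1..int N}. f i j"]) (simp add: periodicD_x)

lemma gsum_shift_y_pred: "periodic N f \<Longrightarrow> gsum N (\<lambda>i j. f i (j - 1)) = gsum N f"
  unfolding gsum_def by (intro sum.cong refl sum_periodic_shift_pred) (simp add: periodicD_y)

lemma gsum_mult_dx:
  assumes f: "periodic N f" and g: "periodic N g"
  shows "gsum N (\<lambda>i j. f i j * dx h g i j) = - gsum N (\<lambda>i j. Dx h f i j * g i j)"
proof -
  have "periodic N (\<lambda>i j. f (i + 1) j * g i j)"
    by (rule periodicI) (simp_all add: periodic_simps f g)
  from gsum_shift_x_pred[OF this] have shift: "gsum N (\<lambda>i j. f i j * g (i - 1) j) = gsum N (\<lambda>i j. f (i + 1) j * g i j)"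
    by simp
  have "gsum N (\<lambda>i j. f i j * dx h g i j) = gsum N (\<lambda>i j. f i j * g i j - f i j * g (i - 1) j) / h"
    unfolding gsum_divide[symmetric] by (rule gsum_cong) (simp add: dx_def right_diff_distrib diff_divide_distrib)
  moreover have "gsum N (\<lambda>i j. Dx h f i j * g i j) = gsum N (\<lambda>i j. f (i + 1) j * g i j - f i j * g i j) / h"
    unfolding gsum_divide[symmetric] by (rule gsum_cong) (simp add: Dx_def left_diff_distrib diff_divide_distrib)
  ultimately show ?thesis unfolding gsum_diff shift by (simp add: diff_divide_distrib)
qed

lemma gsum_mult_dy:
  assumes f: "periodic N f" and g: "periodic N g"
  shows "gsum N (\<lambda>i j. f i j * dy h g i j) = - gsum N (\<lambda>i j. Dy h f i j * g i j)"
proof -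
  have "periodic N (\<lambda>i j. f i (j + 1) * g i j)"
    by (rule periodicI) (simp_all add: periodic_simps f g)
  from gsum_shift_y_pred[OF this] have shift: "gsum N (\<lambda>i j. f i j * g i (j - 1)) = gsum N (\<lambda>i j. f i (j + 1) * g i j)"
    by simp
  have "gsum N (\<lambda>i j. f i j * dy h g i j) = gsum N (\<lambda>i j. f i j * g i j - f i j * g i (j - 1)) / h"
    unfolding gsum_divide[symmetric] by (rule gsum_cong) (simp add: dy_def right_diff_distrib diff_divide_distrib)
  moreover have "gsum N (\<lambda>i j. Dy h f i j * g i j) = gsum N (\<lambda>i j. f i (j + 1) * g i j - f i j * g i j) / h"
    unfolding gsum_divide[symmetric] by (rule gsum_cong) (simp add: Dy_def left_diff_distrib diff_divide_distrib)
  ultimately show ?thesis unfolding gsum_diff shift by (simp add: diff_divide_distrib)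
qed

lemma gsum_mult_ax:
  assumes f: "periodic N f" and g: "periodic N g"
  shows "gsum N (\<lambda>i j. f i j * ax g i j) = gsum N (\<lambda>i j. Ax f i j * g i j)"
proof -
  have "periodic N (\<lambda>i j. f (i + 1) j * g i j)"
    by (rule periodicI) (simp_all add: periodic_simps f g)
  from gsum_shift_x_pred[OF this] have shift: "gsum N (\<lambda>i j. f i j * g (i - 1) j) = gsum N (\<lambda>i j. f (i + 1) j * g i j)"
    by simp
  have "gsum N (\<lambda>i j. f i j * ax g i j) = gsum N (\<lambda>i j. f i j * g i j + f i j * g (i - 1) j) / 2"
    unfolding gsum_divide[symmetric] by (rule gsum_cong) (simp add: ax_def distrib_left add_divide_distrib)
  moreover have "gsum N (\<lambda>i j. Ax f i j * g i j) = gsum N (\<lambda>i j. f (i + 1) j * g i j + f i j * g i j) / 2"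
    unfolding gsum_divide[symmetric] by (rule gsum_cong) (simp add: Ax_def distrib_right add_divide_distrib)
  ultimately show ?thesis unfolding gsum_add shift by simp
qed

lemma gsum_mult_ay:
  assumes f: "periodic N f" and g: "periodic N g"
  shows "gsum N (\<lambda>i j. f i j * ay g i j) = gsum N (\<lambda>i j. Ay f i j * g i j)"
proof -
  have "periodic N (\<lambda>i j. f i (j + 1) * g i j)"
    by (rule periodicI) (simp_all add: periodic_simps f g)
  from gsum_shift_y_pred[OF this] have shift: "gsum N (\<lambda>i j. f i j * g i (j - 1)) = gsum N (\<lambda>i j. f i (j + 1) * g i j)"
    by simp
  have "gsum N (\<lambda>i j. f i j * ay g i j) = gsum N (\<lambda>i j. f i j * g i j + f i j * g i (j - 1)) / 2"
    unfolding gsum_divide[symmetric] by (rule gsum_cong) (simp add: ay_def distrib_left add_divide_distrib)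
  moreover have "gsum N (\<lambda>i j. Ay f i j * g i j) = gsum N (\<lambda>i j. f i (j + 1) * g i j + f i j * g i j) / 2"
    unfolding gsum_divide[symmetric] by (rule gsum_cong) (simp add: Ay_def distrib_right add_divide_distrib)
  ultimately show ?thesis unfolding gsum_add shift by simp
qed

text \<open>In the notation of the paper, \<open>dirichlet N h f g = h\<^sup>-\<^sup>2 \<langle>\<nabla>\<^sub>h f, \<nabla>\<^sub>h g\<rangle>\<close>.\<close>

definition dirichlet :: "nat \<Rightarrow> real \<Rightarrow> grid \<Rightarrow> grid \<Rightarrow> real" where
  "dirichlet N h f g = gsum N (\<lambda>i j. Dx h f i j * Dx h g i j + Dy h f i j * Dy h g i j)"

lemma dirichlet_commute: "dirichlet N h f g = dirichlet N h g f"
  unfolding dirichlet_def by (simp add: mult.commute)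

lemma dirichlet_nonneg: "0 \<le> dirichlet N h f f"
  unfolding dirichlet_def by (rule gsum_nonneg) simp

lemma gsum_mult_lap:
  assumes f: "periodic N f" and g: "periodic N g"
  shows "gsum N (\<lambda>i j. f i j * lap h g i j) = - dirichlet N h f g"
proof -
  have "gsum N (\<lambda>i j. f i j * lap h g i j) =
     gsum N (\<lambda>i j. f i j * dx h (Dx h g) i j) + gsum N (\<lambda>i j. f i j * dy h (Dy h g) i j)"
    unfolding gsum_add[symmetric] by (rule gsum_cong) (simp add: lap_def distrib_left)
  also have "\<dots> = - gsum N (\<lambda>i j. Dx h f i j * Dx h g i j) - gsum N (\<lambda>i j. Dy h f i j * Dy h g i j)"
    using gsum_mult_dx[OF f periodic_Dx[OF g]] gsum_mult_dy[OF f periodic_Dy[OF g]] by simp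
  finally show ?thesis unfolding dirichlet_def gsum_add by simp
qed

lemma gsum_lap_symmetric:
  assumes "periodic N f" "periodic N g"
  shows "gsum N (\<lambda>i j. f i j * lap h g i j) = gsum N (\<lambda>i j. lap h f i j * g i j)"
  using gsum_mult_lap[OF assms] gsum_mult_lap[OF assms(2,1)] dirichlet_commute[of N h f g]
  by (simp add: mult.commute)

lemma gsum_lap: "periodic N g \<Longrightarrow> gsum N (lap h g) = 0"
  using gsum_mult_lap[OF periodic_const[of N 1], of g h]
  by (simp add: dirichlet_def Dx_def Dy_def gsum_def)

lemma dirichlet_add_scaled:
  "dirichlet N h (\<lambda>i j. a i j + s * b i j) (\<lambda>i j. a i j + s * b i j)
    = dirichlet N h a a + 2 * s * dirichlet N h a b + s\<^sup>2 * dirichlet N h b b"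
proof -
  have "dirichlet N h (\<lambda>i j. a i j + s * b i j) (\<lambda>i j. a i j + s * b i j) =
    gsum N (\<lambda>i j. (Dx h a i j * Dx h a i j + Dy h a i j * Dy h a i j)
      + (2 * s) * (Dx h a i j * Dx h b i j + Dy h a i j * Dy h b i j)
      + s\<^sup>2 * (Dx h b i j * Dx h b i j + Dy h b i j * Dy h b i j))"
    unfolding dirichlet_def
    by (rule gsum_cong) (simp add: Dx_add_scaled Dy_add_scaled algebra_simps power2_eq_square)
  then show ?thesis unfolding dirichlet_def by (simp only: gsum_add gsum_cmult)
qed

lemma dirichlet_diff_const: "dirichlet N h (\<lambda>i j. a i j - c) (\<lambda>i j. a i j - c) = dirichlet N h a a"
  unfolding dirichlet_def Dx_def Dy_def by simp

lemma gsum_Top_mult: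
  assumes u: "periodic N u" and d: "periodic N d"
  shows "gsum N (\<lambda>i j. Top h u i j * d i j) = gsum N (\<lambda>i j.
      kappa' (Ax u i j) * (Dx h u i j)\<^sup>2 * Ax d i j + 2 * kappa (Ax u i j) * Dx h u i j * Dx h d i j
    + kappa' (Ay u i j) * (Dy h u i j)\<^sup>2 * Ay d i j + 2 * kappa (Ay u i j) * Dy h u i j * Dy h d i j)"
proof -
  let ?F = "\<lambda>i j. kappa' (Ax u i j) * (Dx h u i j)\<^sup>2"
  let ?G = "\<lambda>i j. kappa (Ax u i j) * Dx h u i j"
  let ?F' = "\<lambda>i j. kappa' (Ay u i j) * (Dy h u i j)\<^sup>2"
  let ?G' = "\<lambda>i j. kappa (Ay u i j) * Dy h u i j"
  note pF = periodic_face_terms[OF u, of h]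
  have "gsum N (\<lambda>i j. Top h u i j * d i j) = gsum N (\<lambda>i j.
      d i j * ax ?F i j - 2 * (d i j * dx h ?G i j) + d i j * ay ?F' i j - 2 * (d i j * dy h ?G' i j))"
    by (rule gsum_cong) (simp add: Top_def algebra_simps)
  also have "\<dots> = gsum N (\<lambda>i j. d i j * ax ?F i j) - 2 * gsum N (\<lambda>i j. d i j * dx h ?G i j)
    + gsum N (\<lambda>i j. d i j * ay ?F' i j) - 2 * gsum N (\<lambda>i j. d i j * dy h ?G' i j)"
    by (simp only: gsum_linear)
  also have "\<dots> = gsum N (\<lambda>i j. Ax d i j * ?F i j) + 2 * gsum N (\<lambda>i j. Dx h d i j * ?G i j)
    + gsum N (\<lambda>i j. Ay d i j * ?F' i j) + 2 * gsum N (\<lambda>i j. Dy h d i j * ?G' i j)"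
    using gsum_mult_ax[OF d pF(1)] gsum_mult_dx[OF d pF(2)] gsum_mult_ay[OF d pF(3)] gsum_mult_dy[OF d pF(4)]
    by simp
  also have "\<dots> = gsum N (\<lambda>i j. Ax d i j * ?F i j + 2 * (Dx h d i j * ?G i j)
    + Ay d i j * ?F' i j + 2 * (Dy h d i j * ?G' i j))"
    by (simp only: gsum_linear)
  finally show ?thesis by (simp add: algebra_simps)
qed

definition kdelta :: "nat \<Rightarrow> int \<Rightarrow> int \<Rightarrow> grid" where
  "kdelta N x y = (\<lambda>i j. if wrap N i = wrap N x \<and> wrap N j = wrap N y then 1 else 0)"

lemma periodic_kdelta: "periodic N (kdelta N x y)"
  by (rule periodicI) (simp_all add: kdelta_def wrap_shift)

lemma kdelta_cases: "kdelta N x y i j = 0 \<or> kdelta N x y i j = 1"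
  unfolding kdelta_def by simp

lemma kdelta_eq_1_imp_eq: "periodic N F \<Longrightarrow> kdelta N x y i j = 1 \<Longrightarrow> F i j = F x y"
  unfolding kdelta_def by (metis periodic_wrap zero_neq_one)

lemma gsum_mult_kdelta:
  assumes "N \<ge> 1" "periodic N F"
  shows "gsum N (\<lambda>i j. F i j * kdelta N x y i j) = F x y"
proof -
  have "gsum N (\<lambda>i j. F i j * kdelta N x y i j) =
      gsum N (\<lambda>i j. if i = wrap N x then (if j = wrap N y then F i j else 0) else 0)"
    by (rule gsum_cong) (auto simp: kdelta_def wrap_id)
  also have "\<dots> = F (wrap N x) (wrap N y)"
  proof -
    have "(\<Sum>j\<in>{1..int N}. if i = wrap N x then (if j = wrap N y then F i j else 0) else 0)
       = (if i = wrap N x then F i (wrap N y) else 0)" for i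
      using wrap_bounds[OF assms(1), of y] by (cases "i = wrap N x") simp_all
    then show ?thesis unfolding gsum_def using wrap_bounds[OF assms(1), of x] by simp
  qed
  also have "\<dots> = F x y" by (rule periodic_wrap[OF assms(2)])
  finally show ?thesis .
qed

lemma gsum_kdelta_mult: "N \<ge> 1 \<Longrightarrow> periodic N F \<Longrightarrow> gsum N (\<lambda>i j. kdelta N x y i j * F i j) = F x y"
  using gsum_mult_kdelta[of N F x y] by (simp add: mult.commute)

lemma gsum_kdelta: "N \<ge> 1 \<Longrightarrow> gsum N (kdelta N x y) = 1"
  using gsum_kdelta_mult[of N "\<lambda>i j. 1" x y] by (simp add: periodic_const)

lemma abs_le_gsum_abs:
  assumes "N \<ge> 1" "periodic N f"
  shows "\<bar>f i j\<bar> \<le> gsum N (\<lambda>i j. \<bar>f i j\<bar>)"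
proof -
  have "\<bar>f i j\<bar> = \<bar>f (wrap N i) (wrap N j)\<bar>" by (simp add: periodic_wrap[OF assms(2)])
  also have "\<dots> \<le> gsum N (\<lambda>i j. \<bar>f i j\<bar>)"
    using wrap_bounds[OF assms(1)] by (intro member_le_gsum[where f="\<lambda>i j. \<bar>f i j\<bar>"]) auto
  finally show ?thesis .
qed

lemma periodic_pos_lower_bound:
  assumes "N \<ge> 1" "periodic N f" "\<And>i j. 0 < f i j"
  shows "\<exists>e>0. \<forall>i j. e \<le> f i j"
proof -
  let ?M = "gsum N (\<lambda>i j. \<bar>1 / f i j\<bar>)"
  have M: "\<bar>1 / f i j\<bar> \<le> ?M" for i j
    by (rule abs_le_gsum_abs[OF assms(1) periodic_comp[OF assms(2)]])
  have "0 < ?M" using M[of 1 1] assms(3)[of 1 1] by (smt (verit) divide_pos_pos)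
  moreover have "1 / ?M \<le> f i j" for i j
    using M[of i j] assms(3)[of i j] \<open>0 < ?M\<close> by (simp add: field_simps)
  ultimately show ?thesis by (intro exI[of _ "1 / ?M"]) auto
qed

lemma exists_uniform_margin:
  assumes "N \<ge> 1" "\<And>k. k \<in> {1,2,3::nat} \<Longrightarrow> periodic N (f k)" "\<And>k i j. k \<in> {1,2,3} \<Longrightarrow> c < f k i j"
  shows "\<exists>e>0. \<forall>k\<in>{1,2,3}. \<forall>i j. c + e \<le> f k i j"
proof -
  have "\<exists>e>0. \<forall>i j. e \<le> f k i j - c" if "k \<in> {1,2,3}" for k
    using assms(2,3)[OF that] by (intro periodic_pos_lower_bound[OF assms(1)] periodic_diff periodic_const) auto
  then obtain e1 e2 e3 where e: "e1 > 0" "\<forall>i j. e1 \<le> f 1 i j - c" "e2 > 0" "\<forall>i j. e2 \<le> f 2 i j - c"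
    "e3 > 0" "\<forall>i j. e3 \<le> f 3 i j - c"
    by (metis insert_iff)
  show ?thesis
  proof (intro exI[of _ "min e1 (min e2 e3)"] conjI ballI allI)
    show "0 < min e1 (min e2 e3)" using e by simp
    fix k i j assume "k \<in> {1,2,3::nat}"
    then show "c + min e1 (min e2 e3) \<le> f k i j"
      using e(2)[rule_format, of i j] e(4)[rule_format, of i j] e(6)[rule_format, of i j] by auto
  qed
qed

lemma diff_sq_le_dirichlet:
  assumes "1 \<le> k" "k \<le> int N" "1 \<le> l" "l \<le> int N"
  shows "(Dx h w k l)\<^sup>2 \<le> dirichlet N h w w" "(Dy h w k l)\<^sup>2 \<le> dirichlet N h w w"
proof -
  have "(Dx h w k l)\<^sup>2 + (Dy h w k l)\<^sup>2 \<le> dirichlet N h w w"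
    unfolding dirichlet_def power2_eq_square
    by (rule member_le_gsum[where f="\<lambda>i j. Dx h w i j * Dx h w i j + Dy h w i j * Dy h w i j"])
      (use assms in auto)
  then show "(Dx h w k l)\<^sup>2 \<le> dirichlet N h w w" "(Dy h w k l)\<^sup>2 \<le> dirichlet N h w w"
    by (smt (verit) zero_le_power2)+
qed

lemma abs_diff_x_le_dirichlet:
  assumes "h > 0" "1 \<le> k" "k \<le> int N" "1 \<le> l" "l \<le> int N"
  shows "\<bar>w (k + 1) l - w k l\<bar> \<le> h * sqrt (dirichlet N h w w)"
proof -
  have "\<bar>Dx h w k l\<bar> \<le> sqrt (dirichlet N h w w)"
    using diff_sq_le_dirichlet(1)[OF assms(2-5)] by (intro real_le_rsqrt) simp
  moreover have "\<bar>w (k + 1) l - w k l\<bar> = h * \<bar>Dx h w k l\<bar>" using assms(1) by (simp add: Dx_def abs_div)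
  ultimately show ?thesis using assms(1) by simp
qed

lemma abs_diff_y_le_dirichlet:
  assumes "h > 0" "1 \<le> k" "k \<le> int N" "1 \<le> l" "l \<le> int N"
  shows "\<bar>w k (l + 1) - w k l\<bar> \<le> h * sqrt (dirichlet N h w w)"
proof -
  have "\<bar>Dy h w k l\<bar> \<le> sqrt (dirichlet N h w w)"
    using diff_sq_le_dirichlet(2)[OF assms(2-5)] by (intro real_le_rsqrt) simp
  moreover have "\<bar>w k (l + 1) - w k l\<bar> = h * \<bar>Dy h w k l\<bar>" using assms(1) by (simp add: Dy_def abs_div)
  ultimately show ?thesis using assms(1) by simp
qed

lemma abs_diff_row_le_dirichlet:
  assumes "h > 0" "1 \<le> l" "l \<le> int N" "1 \<le> i" "i \<le> int N"
  shows "\<bar>w i l - w 1 l\<bar> \<le> (i - 1) * (h * sqrt (dirichlet N h w w))"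
  using assms(4,5)
proof (induct i rule: int_ge_induct)
  case (step i)
  have "\<bar>w (i + 1) l - w 1 l\<bar> \<le> \<bar>w (i + 1) l - w i l\<bar> + \<bar>w i l - w 1 l\<bar>" by simp
  also have "\<dots> \<le> h * sqrt (dirichlet N h w w) + (i - 1) * (h * sqrt (dirichlet N h w w))"
    using abs_diff_x_le_dirichlet[OF assms(1) step(1) _ assms(2,3), of w] step by simp
  finally show ?case by (simp add: algebra_simps)
qed simp

lemma abs_diff_col_le_dirichlet:
  assumes "h > 0" "1 \<le> k" "k \<le> int N" "1 \<le> j" "j \<le> int N"
  shows "\<bar>w k j - w k 1\<bar> \<le> (j - 1) * (h * sqrt (dirichlet N h w w))"
  using assms(4,5)
proof (induct j rule: int_ge_induct)
  case (step j)
  have "\<bar>w k (j + 1) - w k 1\<bar> \<le> \<bar>w k (j + 1) - w k j\<bar> + \<bar>w k j - w k 1\<bar>" by simp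
  also have "\<dots> \<le> h * sqrt (dirichlet N h w w) + (j - 1) * (h * sqrt (dirichlet N h w w))"
    using abs_diff_y_le_dirichlet[OF assms(1,2,3) step(1), of w] step by simp
  finally show ?case by (simp add: algebra_simps)
qed simp

lemma oscillation_le_dirichlet:
  assumes "h > 0" "N \<ge> 1" "periodic N w"
  shows "\<bar>w i j - w 1 1\<bar> \<le> 2 * real N * (h * sqrt (dirichlet N h w w))"
proof -
  let ?a = "wrap N i" and ?b = "wrap N j" and ?s = "h * sqrt (dirichlet N h w w)"
  have s0: "0 \<le> ?s" using assms(1) dirichlet_nonneg[of N h w] by simp
  have a: "1 \<le> ?a" "?a \<le> int N" and b: "1 \<le> ?b" "?b \<le> int N" using wrap_bounds[OF assms(2)] by auto
  have "\<bar>w ?a ?b - w 1 1\<bar> \<le> \<bar>w ?a ?b - w ?a 1\<bar> + \<bar>w ?a 1 - w 1 1\<bar>" by simp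
  also have "\<dots> \<le> (?b - 1) * ?s + (?a - 1) * ?s"
    using abs_diff_col_le_dirichlet[of h ?a N ?b w] abs_diff_row_le_dirichlet[of h 1 N ?a w] a b assms(1,2)
    by (intro add_mono) simp_all
  also have "\<dots> \<le> real N * ?s + real N * ?s"
    using a b s0 by (intro add_mono mult_right_mono) simp_all
  finally show ?thesis using periodic_wrap[OF assms(3), of i j] by (simp add: algebra_simps)
qed

text \<open>Testing \<open>\<Delta>\<^sub>h w\<close> against \<open>w\<close> bounds \<open>\<parallel>\<nabla>\<^sub>h w\<parallel>\<^sup>2\<close> by \<open>\<parallel>w\<parallel>\<^sub>\<infinity>\<close>, which in turn is
  controlled by \<open>\<parallel>\<nabla>\<^sub>h w\<parallel>\<close> via the oscillation estimate.\<close>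

lemma bounded_by_lap_bound:
  assumes "h > 0" "N \<ge> 1" "periodic N w" "w 1 1 = 0" "M \<ge> 0"
    and "\<And>i j. \<bar>lap h w i j\<bar> \<le> M"
  shows "\<bar>w i j\<bar> \<le> 4 * real N ^ 4 * h\<^sup>2 * M"
proof -
  define X where "X = sqrt (dirichlet N h w w)"
  have X0: "0 \<le> X" and XX: "X * X = dirichlet N h w w"
    unfolding X_def using dirichlet_nonneg[of N h w] by simp_all
  have wb: "\<bar>w i j\<bar> \<le> 2 * real N * (h * X)" for i j
    using oscillation_le_dirichlet[OF assms(1-3), of i j] assms(4) unfolding X_def by simp
  have "dirichlet N h w w = gsum N (\<lambda>i j. - (w i j * lap h w i j))"
    using gsum_mult_lap[OF assms(3) assms(3)] by (simp add: gsum_minus)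
  also have "\<dots> \<le> gsum N (\<lambda>i j. (2 * real N * (h * X)) * M)"
  proof (rule gsum_mono)
    fix i j
    have "- (w i j * lap h w i j) \<le> \<bar>w i j\<bar> * \<bar>lap h w i j\<bar>" by (simp add: abs_mult[symmetric])
    also have "\<dots> \<le> (2 * real N * (h * X)) * M"
      using wb[of i j] assms(6)[of i j] X0 assms(1) by (intro mult_mono) simp_all
    finally show "- (w i j * lap h w i j) \<le> (2 * real N * (h * X)) * M" .
  qed
  also have "\<dots> = real N * real N * (2 * real N * (h * X) * M)" by (simp add: gsum_const)
  finally have "X * X \<le> (2 * real N ^ 3 * h * M) * X" using XX by (simp add: power3_eq_cube algebra_simps)
  then have Xb: "X \<le> 2 * real N ^ 3 * h * M"
    using X0 by (cases "X = 0") (use assms in \<open>simp_all add: mult_le_cancel_right\<close>)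
  have "\<bar>w i j\<bar> \<le> 2 * real N * (h * (2 * real N ^ 3 * h * M))"
    using wb[of i j] Xb assms(1,2) by (smt (verit) mult_left_mono of_nat_0_le_iff)
  also have "\<dots> = 4 * real N ^ 4 * h\<^sup>2 * M" by (simp add: power2_eq_square power3_eq_cube power4_eq_xxxx)
  finally show ?thesis .
qed

lemma continuous_on_grid_eval [continuous_intros]: "continuous_on S (\<lambda>w::grid. w i j)"
proof -
  have "continuous_on UNIV (\<lambda>w::grid. w i)" "continuous_on UNIV (\<lambda>g::int\<Rightarrow>real. g j)" by simp_all
  then have "continuous_on UNIV ((\<lambda>g::int\<Rightarrow>real. g j) \<circ> (\<lambda>w::grid. w i))"
    by (meson continuous_on_compose continuous_on_subset top_greatest)
  then show ?thesis by (simp add: o_def) (metis continuous_on_subset subset_UNIV)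
qed

lemma continuous_on_fst_eval [continuous_intros]: "continuous_on S (\<lambda>p::grid \<times> grid. fst p i j)"
  and continuous_on_snd_eval [continuous_intros]: "continuous_on S (\<lambda>p::grid \<times> grid. snd p i j)"
  using continuous_on_compose[OF continuous_on_fst[OF continuous_on_id] continuous_on_grid_eval[of "fst ` S" i j]]
    continuous_on_compose[OF continuous_on_snd[OF continuous_on_id] continuous_on_grid_eval[of "snd ` S" i j]]
  by (simp_all add: o_def)

lemma compact_PiE_UNIV:
  fixes K :: "'b::topological_space set"
  assumes "compact K" shows "compact (PiE (UNIV::'a set) (\<lambda>_. K))"
proof -
  have "compactin (product_topology (\<lambda>_. euclidean) UNIV) (PiE (UNIV::'a set) (\<lambda>_. K))"
    using assms by (simp add: compactin_PiE)
  then show ?thesis by (simp add: euclidean_product_topology)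
qed

lemma compact_grid_box: "compact {w::grid. \<forall>i j. \<bar>w i j\<bar> \<le> R}"
proof -
  have "{w::grid. \<forall>i j. \<bar>w i j\<bar> \<le> R} = PiE UNIV (\<lambda>_. PiE UNIV (\<lambda>_. {-R..R}))"
    by (auto simp: PiE_def Pi_def abs_le_iff minus_le_iff)
  moreover have "compact (PiE (UNIV::int set) (\<lambda>_. PiE (UNIV::int set) (\<lambda>_. {-R..R::real})))"
    by (intro compact_PiE_UNIV compact_Icc)
  ultimately show ?thesis by simp
qed

lemma compact_grid_box2: "compact {p::grid \<times> grid. \<forall>i j. \<bar>fst p i j\<bar> \<le> R \<and> \<bar>snd p i j\<bar> \<le> R}"
proof -
  have "{p::grid \<times> grid. \<forall>i j. \<bar>fst p i j\<bar> \<le> R \<and> \<bar>snd p i j\<bar> \<le> R} =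
      {w::grid. \<forall>i j. \<bar>w i j\<bar> \<le> R} \<times> {w::grid. \<forall>i j. \<bar>w i j\<bar> \<le> R}" by auto
  then show ?thesis using compact_Times[OF compact_grid_box compact_grid_box] by simp
qed

lemma closed_periodic: "closed {w::grid. periodic N w}"
  unfolding periodic_def by (intro closed_Collect_all closed_Collect_eq continuous_on_grid_eval)

lemma continuous_on_Ax: "(\<And>i j. continuous_on S (\<lambda>x. G x i j)) \<Longrightarrow> continuous_on S (\<lambda>x. Ax (G x) i j)"
  and continuous_on_Ay: "(\<And>i j. continuous_on S (\<lambda>x. G x i j)) \<Longrightarrow> continuous_on S (\<lambda>x. Ay (G x) i j)"
  and continuous_on_Dx: "(\<And>i j. continuous_on S (\<lambda>x. G x i j)) \<Longrightarrow> continuous_on S (\<lambda>x. Dx h (G x) i j)"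
  and continuous_on_Dy: "(\<And>i j. continuous_on S (\<lambda>x. G x i j)) \<Longrightarrow> continuous_on S (\<lambda>x. Dy h (G x) i j)"
  and continuous_on_lap: "(\<And>i j. continuous_on S (\<lambda>x. G x i j)) \<Longrightarrow> continuous_on S (\<lambda>x. lap h (G x) i j)"
  unfolding Ax_def Ay_def Dx_def Dy_def lap_def dx_def dy_def divide_inverse
  by (intro continuous_intros; simp)+

lemma continuous_on_dirichlet: "continuous_on S (\<lambda>w. dirichlet N h w w)"
  unfolding dirichlet_def gsum_def Dx_def Dy_def divide_inverse by (intro continuous_intros)

section \<open>The discrete Poisson equation\<close>

text \<open>A mean-zero \<open>f\<close> is the discrete Laplacian of a minimiser of the Dirichlet energy below; a
  minimiser exists because the energy is coercive on functions normalised by \<open>\<psi> 1 1 = 0\<close>.\<close>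

definition poisson_energy :: "nat \<Rightarrow> real \<Rightarrow> grid \<Rightarrow> grid \<Rightarrow> real" where
  "poisson_energy N h f \<psi> = dirichlet N h \<psi> \<psi> / 2 + gsum N (\<lambda>i j. f i j * \<psi> i j)"

lemma poisson_energy_lower_bound:
  assumes "h > 0" "N \<ge> 1" "periodic N \<psi>" "\<psi> 1 1 = 0"
  defines "X \<equiv> sqrt (dirichlet N h \<psi> \<psi>)"
  shows "X * (X / 2 - 2 * real N * h * gsum N (\<lambda>i j. \<bar>f i j\<bar>)) \<le> poisson_energy N h f \<psi>"
proof -
  have XX: "X * X = dirichlet N h \<psi> \<psi>" unfolding X_def using dirichlet_nonneg[of N h \<psi>] by simp
  have \<psi>b: "\<bar>\<psi> i j\<bar> \<le> 2 * real N * (h * X)" for i j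
    using oscillation_le_dirichlet[OF assms(1-3), of i j] assms(4) unfolding X_def by simp
  have "gsum N (\<lambda>i j. - (f i j * \<psi> i j)) \<le> gsum N (\<lambda>i j. \<bar>f i j\<bar> * (2 * real N * (h * X)))"
  proof (rule gsum_mono)
    fix i j
    have "- (f i j * \<psi> i j) \<le> \<bar>f i j\<bar> * \<bar>\<psi> i j\<bar>" by (simp add: abs_mult[symmetric])
    also have "\<dots> \<le> \<bar>f i j\<bar> * (2 * real N * (h * X))" using \<psi>b[of i j] by (intro mult_left_mono) simp_all
    finally show "- (f i j * \<psi> i j) \<le> \<bar>f i j\<bar> * (2 * real N * (h * X))" .
  qed
  then show ?thesis
    unfolding poisson_energy_def gsum_minus gsum_multc XX[symmetric] by (simp add: algebra_simps)
qed

lemma poisson_energy_pos_far_out: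
  assumes h: "h > 0" and N: "N \<ge> 1" and p: "periodic N \<phi>" "\<phi> 1 1 = 0"
    and far: "2 * real N * h * (4 * real N * h * gsum N (\<lambda>i j. \<bar>f i j\<bar>)) < \<bar>\<phi> i j\<bar>"
  shows "0 < poisson_energy N h f \<phi>"
proof -
  let ?F = "gsum N (\<lambda>i j. \<bar>f i j\<bar>)" and ?X = "sqrt (dirichlet N h \<phi> \<phi>)"
  have "0 \<le> ?F" by (rule gsum_nonneg) simp
  have "\<bar>\<phi> i j\<bar> \<le> 2 * real N * h * ?X"
    using oscillation_le_dirichlet[OF h N p(1), of i j] p(2) by simp
  then have "2 * real N * h * (4 * real N * h * ?F) < 2 * real N * h * ?X" using far by linarith
  moreover have "0 < 2 * real N * h" using h N by simp
  ultimately have "4 * real N * h * ?F < ?X" by (simp only: mult_less_cancel_left_pos)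
  moreover have "0 \<le> 4 * real N * h * ?F" using h \<open>0 \<le> ?F\<close> by simp
  ultimately have "0 < ?X * (?X / 2 - 2 * real N * h * ?F)" by (intro mult_pos_pos) linarith+
  also have "\<dots> \<le> poisson_energy N h f \<phi>" by (rule poisson_energy_lower_bound[OF h N p])
  finally show ?thesis .
qed

lemma poisson_energy_attains_min:
  assumes h: "h > 0" and N: "N \<ge> 1" and f0: "gsum N f = 0"
  shows "\<exists>\<psi>. periodic N \<psi> \<and> (\<forall>\<phi>. periodic N \<phi> \<longrightarrow> poisson_energy N h f \<psi> \<le> poisson_energy N h f \<phi>)"
proof -
  let ?E = "poisson_energy N h f"
  define R where "R = 2 * real N * h * (4 * real N * h * gsum N (\<lambda>i j. \<bar>f i j\<bar>))"
  define K where "K = {\<psi>. periodic N \<psi>} \<inter> {\<psi>. \<psi> 1 1 = 0} \<inter> {\<psi>::grid. \<forall>i j. \<bar>\<psi> i j\<bar> \<le> R}"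
  have "0 \<le> R" unfolding R_def using h by (simp add: gsum_nonneg)
  then have K0: "(\<lambda>i j. 0) \<in> K" unfolding K_def by (simp add: periodic_const)
  have cK: "compact K" unfolding K_def
    by (intro closed_Int_compact closed_Int closed_periodic compact_grid_box closed_Collect_eq
        continuous_intros)
  have cE: "continuous_on K ?E" unfolding poisson_energy_def gsum_def
    by (intro continuous_intros continuous_on_dirichlet) simp
  obtain \<psi> where \<psi>K: "\<psi> \<in> K" and \<psi>min: "\<And>\<phi>. \<phi> \<in> K \<Longrightarrow> ?E \<psi> \<le> ?E \<phi>"
    using continuous_attains_inf[OF cK _ cE] K0 by blast
  have "?E \<psi> \<le> ?E \<phi>" if p: "periodic N \<phi>" for \<phi>
  proof -
    define \<phi>' where "\<phi>' = (\<lambda>i j. \<phi> i j - \<phi> 1 1)"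
    have p': "periodic N \<phi>'" "\<phi>' 1 1 = 0" unfolding \<phi>'_def using p by (auto intro: periodic_diff periodic_const)
    have "gsum N (\<lambda>i j. f i j * \<phi>' i j) = gsum N (\<lambda>i j. f i j * \<phi> i j)"
      unfolding \<phi>'_def right_diff_distrib gsum_diff gsum_multc f0 by simp
    then have E': "?E \<phi>' = ?E \<phi>" unfolding poisson_energy_def \<phi>'_def dirichlet_diff_const by simp
    show ?thesis
    proof (cases "\<forall>i j. \<bar>\<phi>' i j\<bar> \<le> R")
      case True
      then show ?thesis using \<psi>min[of \<phi>'] p' E' unfolding K_def by simp
    next
      case False
      then obtain i j where "R < \<bar>\<phi>' i j\<bar>" by (meson not_le)
      then have "0 < ?E \<phi>'" unfolding R_def by (rule poisson_energy_pos_far_out[OF h N p'])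
      moreover have "?E (\<lambda>i j. 0) = 0" by (simp add: poisson_energy_def dirichlet_def Dx_def Dy_def gsum_def)
      ultimately show ?thesis using \<psi>min[OF K0] E' by simp
    qed
  qed
  then show ?thesis using \<psi>K unfolding K_def by blast
qed

lemma quadratic_nonneg_imp_linear_coeff_zero:
  fixes a b :: real
  assumes "b \<ge> 0" "\<And>s. 0 \<le> a * s + b * s\<^sup>2"
  shows "a = 0"
proof -
  define c where "c = b + 1"
  have c: "c > 0" using assms(1) unfolding c_def by simp
  let ?s = "- a / c"
  have cs: "c * ?s = - a" using c by simp
  have "c\<^sup>2 * (a * ?s + b * ?s\<^sup>2) = a * c * (c * ?s) + b * (c * ?s)\<^sup>2"
    by (simp add: algebra_simps power2_eq_square)
  also have "\<dots> = - a\<^sup>2" unfolding cs by (simp add: c_def algebra_simps power2_eq_square)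
  finally have "c\<^sup>2 * (a * ?s + b * ?s\<^sup>2) = - a\<^sup>2" .
  moreover have "0 \<le> c\<^sup>2 * (a * ?s + b * ?s\<^sup>2)" using assms(2)[of ?s] by simp
  ultimately show ?thesis by simp
qed

lemma lap_eq_if_minimises_poisson_energy:
  assumes N: "N \<ge> 1" and f: "periodic N f" and p\<psi>: "periodic N \<psi>"
    and min: "\<And>\<phi>. periodic N \<phi> \<Longrightarrow> poisson_energy N h f \<psi> \<le> poisson_energy N h f \<phi>"
  shows "lap h \<psi> x y = f x y"
proof -
  have orth: "gsum N (\<lambda>i j. v i j * (f i j - lap h \<psi> i j)) = 0" if pv: "periodic N v" for v
  proof -
    let ?a = "dirichlet N h \<psi> v + gsum N (\<lambda>i j. f i j * v i j)"
    have "poisson_energy N h f (\<lambda>i j. \<psi> i j + s * v i j)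
        = poisson_energy N h f \<psi> + (?a * s + (dirichlet N h v v / 2) * s\<^sup>2)" for s
      unfolding poisson_energy_def dirichlet_add_scaled gsum_mult_add_scaled by (simp add: field_simps)
    moreover have "poisson_energy N h f \<psi> \<le> poisson_energy N h f (\<lambda>i j. \<psi> i j + s * v i j)" for s
      using p\<psi> pv by (intro min periodic_add periodic_cmult)
    ultimately have "?a = 0"
      by (intro quadratic_nonneg_imp_linear_coeff_zero[of "dirichlet N h v v / 2"])
        (simp_all add: dirichlet_nonneg)
    moreover have "dirichlet N h \<psi> v = - gsum N (\<lambda>i j. v i j * lap h \<psi> i j)"
      using gsum_mult_lap[OF pv p\<psi>, of h] dirichlet_commute[of N h \<psi> v] by simp
    ultimately show ?thesis by (simp add: right_diff_distrib gsum_diff mult.commute)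
  qed
  have "periodic N (\<lambda>i j. f i j - lap h \<psi> i j)" using f p\<psi> by (intro periodic_diff periodic_lap)
  then have "f x y - lap h \<psi> x y = 0"
    using orth[OF periodic_kdelta[of N x y]] gsum_kdelta_mult[OF N] by simp
  then show ?thesis by simp
qed

lemma discrete_poisson_solvable:
  assumes "h > 0" "N \<ge> 1" "periodic N f" "gsum N f = 0"
  shows "\<exists>\<psi>. periodic N \<psi> \<and> (\<forall>i j. lap h \<psi> i j = f i j)"
  using poisson_energy_attains_min[OF assms(1,2,4)] lap_eq_if_minimises_poisson_energy[OF assms(2,3)]
  by blast

lemma DERIV_gsum:
  "(\<And>i j. ((\<lambda>s. F s i j) has_real_derivative F' i j) (at x)) \<Longrightarrow>
    ((\<lambda>s. gsum N (F s)) has_real_derivative gsum N F') (at x)"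
  unfolding gsum_def by (intro DERIV_sum)

lemma DERIV_affine_at_0: "((\<lambda>s. a + s * b) has_real_derivative b) (at 0)"
  and DERIV_cmult_affine_at_0: "((\<lambda>s. c * (a + s * b)) has_real_derivative c * b) (at 0)"
  and DERIV_quadratic_at_0: "((\<lambda>s. a + 2 * s * b + s\<^sup>2 * c) has_real_derivative 2 * b) (at 0)"
  by (auto intro!: derivative_eq_intros)

definition entropy :: "model \<Rightarrow> real \<Rightarrow> real \<Rightarrow> real" where
  "entropy P a b = a / M0 P * ln (alpha P * a / M0 P) + b / N0 P * ln (beta P * b / N0 P)
     + (1 - a - b) * ln (1 - a - b)"

lemma alpha_pos: "M0 P > 0 \<Longrightarrow> N0 P > 0 \<Longrightarrow> alpha P > 0"
proof -
  assume "M0 P > 0" "N0 P > 0"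
  then have "sqrt (M0 P / pi) + N0 P / 2 > 0" by (simp add: add_pos_pos)
  then show ?thesis unfolding alpha_def by simp
qed

lemma beta_pos: "M0 P > 0 \<Longrightarrow> N0 P > 0 \<Longrightarrow> beta P > 0"
  unfolding beta_def by (simp add: add_nonneg_pos)

lemma DERIV_scaled_xlnx_at_0:
  "M > 0 \<Longrightarrow> c > 0 \<Longrightarrow> a > 0 \<Longrightarrow>
    ((\<lambda>s. (a + s * d) / M * ln (c * (a + s * d) / M)) has_real_derivative
      d / M * (ln (c * a / M) + 1)) (at 0)"
  by (rule derivative_eq_intros refl | simp)+ (simp add: field_simps)

lemma DERIV_xlnx_at_0:
  "a > 0 \<Longrightarrow> ((\<lambda>s. (a + s * d) * ln (a + s * d)) has_real_derivative d * (ln a + 1)) (at 0)"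
  by (rule derivative_eq_intros refl | simp)+ (simp add: field_simps)

lemma entropy_directional_deriv:
  assumes "M0 P > 0" "N0 P > 0" and "a > 0" "b > 0" "a + b < 1"
  shows "((\<lambda>s. entropy P (a + s * da) (b + s * db)) has_real_derivative
      dSa P a b * da + dSb P a b * db) (at 0)"
proof -
  have "alpha P > 0" "beta P > 0" using alpha_pos beta_pos assms(1,2) by auto
  moreover have "1 - (a + s * da) - (b + s * db) = (1 - a - b) + s * (- da - db)" for s
    by (simp add: algebra_simps)
  ultimately have "((\<lambda>s. entropy P (a + s * da) (b + s * db)) has_real_derivative
     da / M0 P * (ln (alpha P * a / M0 P) + 1) + db / N0 P * (ln (beta P * b / N0 P) + 1)
       + (- da - db) * (ln (1 - a - b) + 1)) (at 0)"
    unfolding entropy_def using assms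
    by (simp only:) (intro DERIV_add DERIV_scaled_xlnx_at_0 DERIV_xlnx_at_0; simp)
  then show ?thesis unfolding dSa_def dSb_def by (simp add: algebra_simps)
qed

lemma DERIV_kappa_mult_sq_at_0:
  "A > 0 \<Longrightarrow> ((\<lambda>s. kappa (A + s * A') * (D + s * D')\<^sup>2) has_real_derivative
     kappa' A * A' * D\<^sup>2 + 2 * kappa A * D * D') (at 0)"
  unfolding kappa_def
  by (rule derivative_eq_intros refl | simp)+ (simp add: kappa_def kappa'_def field_simps power2_eq_square)

text \<open>The gradient part of \<open>G\<^sub>h\<close> for one component, without the factors \<open>\<epsilon>\<^sup>2\<close> and \<open>h\<^sup>2\<close>.\<close>

definition gradient_energy :: "nat \<Rightarrow> real \<Rightarrow> grid \<Rightarrow> real" where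
  "gradient_energy N h u =
     gsum N (\<lambda>i j. kappa (Ax u i j) * (Dx h u i j)\<^sup>2 + kappa (Ay u i j) * (Dy h u i j)\<^sup>2)"

lemma Ax_pos: "(\<And>i j. u i j > 0) \<Longrightarrow> Ax u i j > 0"
  and Ay_pos: "(\<And>i j. u i j > 0) \<Longrightarrow> Ay u i j > 0"
  by (simp_all add: Ax_def Ay_def add_pos_pos)

lemma gradient_energy_directional_deriv:
  assumes u: "periodic N u" and d: "periodic N d" and pos: "\<And>i j. u i j > 0"
  shows "((\<lambda>s. gradient_energy N h (\<lambda>i j. u i j + s * d i j)) has_real_derivative
      gsum N (\<lambda>i j. Top h u i j * d i j)) (at 0)"
proof -
  have "((\<lambda>s. gradient_energy N h (\<lambda>i j. u i j + s * d i j)) has_real_derivative gsum N (\<lambda>i j.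
      (kappa' (Ax u i j) * Ax d i j * (Dx h u i j)\<^sup>2 + 2 * kappa (Ax u i j) * Dx h u i j * Dx h d i j)
    + (kappa' (Ay u i j) * Ay d i j * (Dy h u i j)\<^sup>2 + 2 * kappa (Ay u i j) * Dy h u i j * Dy h d i j))) (at 0)"
    unfolding gradient_energy_def Ax_add_scaled Ay_add_scaled Dx_add_scaled Dy_add_scaled
    by (intro DERIV_gsum DERIV_add DERIV_kappa_mult_sq_at_0 Ax_pos Ay_pos pos)
  then show ?thesis unfolding gsum_Top_mult[OF u d] by (simp add: algebra_simps)
qed

lemma abs_kappa'_face_le:
  assumes a: "a > 0" and b: "b > 0" and h: "h > 0"
  shows "\<bar>kappa' ((b + a) / 2) * ((b - a) / h)\<^sup>2\<bar> \<le> 1 / (9 * h\<^sup>2)"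
proof -
  have "(b - a)\<^sup>2 \<le> (b + a)\<^sup>2" using a b by (simp add: power2_eq_square algebra_simps)
  then have "(b - a)\<^sup>2 / (b + a)\<^sup>2 \<le> 1" using a b by simp
  moreover have "\<bar>kappa' ((b + a) / 2) * ((b - a) / h)\<^sup>2\<bar> = ((b - a)\<^sup>2 / (b + a)\<^sup>2) * (1 / (9 * h\<^sup>2))"
    using a b h unfolding kappa'_def by (simp add: abs_mult power_divide field_simps)
  ultimately show ?thesis using mult_right_mono[of "(b - a)\<^sup>2 / (b + a)\<^sup>2" 1 "1 / (9 * h\<^sup>2)"] by simp
qed

lemma abs_kappa_face_le:
  assumes a: "a > 0" and b: "b > 0" and h: "h > 0"
  shows "\<bar>kappa ((b + a) / 2) * ((b - a) / h)\<bar> \<le> 1 / (18 * h)"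
proof -
  have "\<bar>b - a\<bar> \<le> b + a" using a b by simp
  then have "\<bar>b - a\<bar> / (b + a) \<le> 1" using a b by simp
  moreover have "\<bar>kappa ((b + a) / 2) * ((b - a) / h)\<bar> = (\<bar>b - a\<bar> / (b + a)) * (1 / (18 * h))"
  proof -
    have ba: "b + a \<noteq> 0" using a b by simp
    have e36: "36 * ((b + a) / 2) = 18 * (b + a)" by simp
    have k: "kappa ((b + a) / 2) = 1 / (18 * (b + a))" unfolding kappa_def e36 ..
    have "kappa ((b + a) / 2) * ((b - a) / h) = ((b - a) / (b + a)) * (1 / (18 * h))"
      unfolding k using ba h by (simp add: field_simps)
    then show ?thesis using a b h by (simp add: abs_mult abs_div)
  qed
  moreover have "0 \<le> 1 / (18 * h)" using h by simp
  ultimately show ?thesis using mult_right_mono[of "\<bar>b - a\<bar> / (b + a)" 1 "1 / (18 * h)"] by simp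
qed

lemma abs_Top_le:
  assumes pos: "\<And>i j. u i j > 0" and h: "h > 0"
  shows "\<bar>Top h u i j\<bar> \<le> 1 / h\<^sup>2"
proof -
  have F1: "\<bar>kappa' (Ax u i j) * (Dx h u i j)\<^sup>2\<bar> \<le> 1 / (9 * h\<^sup>2)" for i j
    unfolding Ax_def Dx_def by (rule abs_kappa'_face_le[OF pos pos h])
  have F2: "\<bar>kappa' (Ay u i j) * (Dy h u i j)\<^sup>2\<bar> \<le> 1 / (9 * h\<^sup>2)" for i j
    unfolding Ay_def Dy_def by (rule abs_kappa'_face_le[OF pos pos h])
  have G1: "\<bar>kappa (Ax u i j) * Dx h u i j\<bar> \<le> 1 / (18 * h)" for i j
    unfolding Ax_def Dx_def by (rule abs_kappa_face_le[OF pos pos h])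
  have G2: "\<bar>kappa (Ay u i j) * Dy h u i j\<bar> \<le> 1 / (18 * h)" for i j
    unfolding Ay_def Dy_def by (rule abs_kappa_face_le[OF pos pos h])
  let ?F = "\<lambda>i j. kappa' (Ax u i j) * (Dx h u i j)\<^sup>2"
  let ?G = "\<lambda>i j. kappa (Ax u i j) * Dx h u i j"
  let ?F' = "\<lambda>i j. kappa' (Ay u i j) * (Dy h u i j)\<^sup>2"
  let ?G' = "\<lambda>i j. kappa (Ay u i j) * Dy h u i j"
  have a1: "\<bar>ax ?F i j\<bar> \<le> 1 / (9 * h\<^sup>2)"
    unfolding ax_def using F1[of i j] F1[of "i-1" j] by (simp add: abs_le_iff; linarith?)
  have a2: "\<bar>ay ?F' i j\<bar> \<le> 1 / (9 * h\<^sup>2)"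
    unfolding ay_def using F2[of i j] F2[of i "j-1"] by (simp add: abs_le_iff; linarith?)
  have d1: "\<bar>dx h ?G i j\<bar> \<le> 1 / (9 * h\<^sup>2)"
  proof -
    have "\<bar>?G i j - ?G (i-1) j\<bar> \<le> 1 / (9 * h)" using G1[of i j] G1[of "i-1" j] by (simp add: abs_le_iff; linarith?)
    then have "\<bar>?G i j - ?G (i-1) j\<bar> / h \<le> (1 / (9 * h)) / h" using h by (intro divide_right_mono) simp_all
    moreover have "(1 / (9 * h)) / h = 1 / (9 * h\<^sup>2)" by (simp add: power2_eq_square)
    ultimately show ?thesis unfolding dx_def using h by (simp add: abs_div power2_eq_square)
  qed
  have d2: "\<bar>dy h ?G' i j\<bar> \<le> 1 / (9 * h\<^sup>2)"
  proof -
    have "\<bar>?G' i j - ?G' i (j-1)\<bar> \<le> 1 / (9 * h)" using G2[of i j] G2[of i "j-1"] by (simp add: abs_le_iff; linarith?)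
    then have "\<bar>?G' i j - ?G' i (j-1)\<bar> / h \<le> (1 / (9 * h)) / h" using h by (intro divide_right_mono) simp_all
    moreover have "(1 / (9 * h)) / h = 1 / (9 * h\<^sup>2)" by (simp add: power2_eq_square)
    ultimately show ?thesis unfolding dy_def using h by (simp add: abs_div power2_eq_square)
  qed
  have "\<bar>Top h u i j\<bar> \<le> 6 * (1 / (9 * h\<^sup>2))"
    unfolding Top_def using a1 a2 d1 d2 by linarith
  also have "\<dots> \<le> 1 / h\<^sup>2" using h by (simp add: field_simps)
  finally show ?thesis .
qed

lemma abs_lap_le:
  assumes b: "\<And>i j. \<bar>e i j\<bar> \<le> M" and h: "h > 0"
  shows "\<bar>lap h e i j\<bar> \<le> 8 * M / h\<^sup>2"
proof -
  have "lap h e i j = (e (i + 1) j + e (i - 1) j + e i (j + 1) + e i (j - 1) - 4 * e i j) / h\<^sup>2"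
    unfolding lap_def dx_def dy_def Dx_def Dy_def using h by (simp add: field_simps power2_eq_square)
  moreover have "\<bar>e (i + 1) j + e (i - 1) j + e i (j + 1) + e i (j - 1) - 4 * e i j\<bar> \<le> 8 * M"
    using b[of "i + 1" j] b[of "i - 1" j] b[of i "j + 1"] b[of i "j - 1"] b[of i j]
    by (simp add: abs_le_iff; linarith?)
  ultimately show ?thesis using h by (simp add: abs_div divide_right_mono)
qed

text \<open>Per face, the difference of the \<open>T\<close>-integrands tested with \<open>u - u'\<close> equals
  \<open>(D/A - D'/A')\<^sup>2 (A + A') / 36\<close>, where \<open>A, D\<close> are the face average and difference of \<open>u\<close>.\<close>

lemma kappa_face_monotone:
  assumes A: "A > 0" and A': "A' > 0"
  shows "0 \<le> kappa' A * D\<^sup>2 * (A - A') + 2 * kappa A * D * (D - D')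
          - (kappa' A' * D'\<^sup>2 * (A - A') + 2 * kappa A' * D' * (D - D'))"
proof -
  define r r' where "r = D / A" and "r' = D' / A'"
  have D: "D = r * A" and D': "D' = r' * A'" unfolding r_def r'_def using A A' by simp_all
  have "kappa' A * D\<^sup>2 * (A - A') + 2 * kappa A * D * (D - D')
          - (kappa' A' * D'\<^sup>2 * (A - A') + 2 * kappa A' * D' * (D - D'))
      = (r - r')\<^sup>2 * (A + A') / 36"
    unfolding D D' kappa_def kappa'_def using A A' by (simp add: field_simps power2_eq_square)
  also have "\<dots> \<ge> 0" using A A' by simp
  finally show ?thesis by simp
qed

lemma gsum_Top_monotone:
  assumes pu: "periodic N u" and pu': "periodic N u'"
    and pos: "\<And>i j. u i j > 0" and pos': "\<And>i j. u' i j > 0"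
  shows "0 \<le> gsum N (\<lambda>i j. (Top h u i j - Top h u' i j) * (u i j - u' i j))"
proof -
  let ?d = "\<lambda>i j. u i j - u' i j"
  have pd: "periodic N ?d" using pu pu' by (rule periodic_diff)
  have diffs: "Ax ?d i j = Ax u i j - Ax u' i j" "Ay ?d i j = Ay u i j - Ay u' i j"
     "Dx h ?d i j = Dx h u i j - Dx h u' i j" "Dy h ?d i j = Dy h u i j - Dy h u' i j" for i j
    unfolding Ax_def Ay_def Dx_def Dy_def by (cases "h = 0"; simp add: field_simps)+
  have "gsum N (\<lambda>i j. (Top h u i j - Top h u' i j) * ?d i j)
      = gsum N (\<lambda>i j. Top h u i j * ?d i j) - gsum N (\<lambda>i j. Top h u' i j * ?d i j)"
    unfolding gsum_diff[symmetric] by (simp add: left_diff_distrib)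
  also have "\<dots> \<ge> 0"
    unfolding gsum_Top_mult[OF pu pd] gsum_Top_mult[OF pu' pd] diffs gsum_diff[symmetric]
  proof (rule gsum_nonneg)
    fix i j
    have A: "Ax u i j > 0" "Ax u' i j > 0" "Ay u i j > 0" "Ay u' i j > 0"
      using pos pos' by (simp_all add: Ax_pos Ay_pos)
    show "0 \<le> kappa' (Ax u i j) * (Dx h u i j)\<^sup>2 * (Ax u i j - Ax u' i j)
         + 2 * kappa (Ax u i j) * Dx h u i j * (Dx h u i j - Dx h u' i j)
       + kappa' (Ay u i j) * (Dy h u i j)\<^sup>2 * (Ay u i j - Ay u' i j)
         + 2 * kappa (Ay u i j) * Dy h u i j * (Dy h u i j - Dy h u' i j)
       - (kappa' (Ax u' i j) * (Dx h u' i j)\<^sup>2 * (Ax u i j - Ax u' i j)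
         + 2 * kappa (Ax u' i j) * Dx h u' i j * (Dx h u i j - Dx h u' i j)
       + kappa' (Ay u' i j) * (Dy h u' i j)\<^sup>2 * (Ay u i j - Ay u' i j)
         + 2 * kappa (Ay u' i j) * Dy h u' i j * (Dy h u i j - Dy h u' i j))"
      using kappa_face_monotone[OF A(1,2), of "Dx h u i j" "Dx h u' i j"]
        kappa_face_monotone[OF A(3,4), of "Dy h u i j" "Dy h u' i j"] by linarith
  qed
  finally show ?thesis .
qed

lemma ln_diff_mult_diff_nonneg:
  fixes x y :: real
  assumes "x > 0" "y > 0"
  shows "0 \<le> (ln x - ln y) * (x - y)"
proof (cases x y rule: linorder_cases)
  case less then show ?thesis using assms by (simp add: mult_nonpos_nonpos)
qed (use assms in simp_all)

lemma ln_diff_mult_diff_eq_0_imp_eq: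
  fixes x y :: real
  assumes "x > 0" "y > 0" "(ln x - ln y) * (x - y) = 0"
  shows "x = y"
  using assms by auto

lemma ln_mult_divide:
  "c > 0 \<Longrightarrow> M > 0 \<Longrightarrow> x > 0 \<Longrightarrow> ln (c * x / M) = ln c + ln x - ln (M :: real)"
  by (simp add: ln_div ln_mult)

lemma dS_monotone_identity:
  assumes "M0 P > 0" "N0 P > 0" "a > 0" "b > 0" "a' > 0" "b' > 0"
  shows "(a - a') * (dSa P a b - dSa P a' b') + (b - b') * (dSb P a b - dSb P a' b')
    = 1 / M0 P * ((ln a - ln a') * (a - a')) + 1 / N0 P * ((ln b - ln b') * (b - b'))
      + (ln (1 - a - b) - ln (1 - a' - b')) * ((1 - a - b) - (1 - a' - b'))"
proof -
  have "alpha P > 0" "beta P > 0" using alpha_pos beta_pos assms(1,2) by auto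
  with assms show ?thesis unfolding dSa_def dSb_def
    by (simp add: ln_mult_divide algebra_simps diff_divide_distrib add_divide_distrib)
qed

lemma dS_monotone:
  assumes "M0 P > 0" "N0 P > 0" "0 < a" "0 < b" "a + b < 1" "0 < a'" "0 < b'" "a' + b' < 1"
  shows "0 \<le> (a - a') * (dSa P a b - dSa P a' b') + (b - b') * (dSb P a b - dSb P a' b')"
    and "(a - a') * (dSa P a b - dSa P a' b') + (b - b') * (dSb P a b - dSb P a' b') = 0 \<Longrightarrow>
      a = a' \<and> b = b'"
proof -
  have pos: "a > 0" "b > 0" "a' > 0" "b' > 0" "1 - a - b > 0" "1 - a' - b' > 0"
    using assms(3-8) by auto
  note terms = ln_diff_mult_diff_nonneg[OF pos(1,3)] ln_diff_mult_diff_nonneg[OF pos(2,4)]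
    ln_diff_mult_diff_nonneg[OF pos(5,6)]
  have scaled: "0 \<le> 1 / M0 P * ((ln a - ln a') * (a - a'))" "0 \<le> 1 / N0 P * ((ln b - ln b') * (b - b'))"
    using terms assms(1,2) by simp_all
  note identity = dS_monotone_identity[OF assms(1,2) pos(1-4)]
  show "0 \<le> (a - a') * (dSa P a b - dSa P a' b') + (b - b') * (dSb P a b - dSb P a' b')"
    unfolding identity using scaled terms by linarith
  assume "(a - a') * (dSa P a b - dSa P a' b') + (b - b') * (dSb P a b - dSb P a' b') = 0"
  then have "(ln a - ln a') * (a - a') = 0" "(ln b - ln b') * (b - b') = 0"
    unfolding identity using scaled terms assms(1,2) by (smt (verit) divide_pos_pos mult_pos_pos)+
  then show "a = a' \<and> b = b'" using ln_diff_mult_diff_eq_0_imp_eq pos by blast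
qed

lemma bdf2_difference:
  fixes q r c d M a b t :: real
  assumes "t > 0" "(3 * q - 4 * c + d) / (2 * t) = M * a" "(3 * r - 4 * c + d) / (2 * t) = M * b"
  shows "q - r = (2 * t * M / 3) * (a - b)"
proof -
  have "3 * q - 4 * c + d = 2 * t * (M * a)" "3 * r - 4 * c + d = 2 * t * (M * b)"
    using assms by (simp_all add: field_simps)
  then show ?thesis by (simp add: algebra_simps)
qed

definition phase :: "nat \<Rightarrow> grid \<Rightarrow> grid \<Rightarrow> grid" where
  "phase k q1 q2 = (\<lambda>i j. if k = 1 then q1 i j else if k = 2 then q2 i j else 1 - q1 i j - q2 i j)"

definition transfer :: "nat \<Rightarrow> nat \<Rightarrow> nat \<Rightarrow> real" where
  "transfer a b k = (if k = a then 1 else 0) - (if k = b then 1 else 0)"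

lemma inGibbs_iff_phase:
  "inGibbs N q1 q2 \<longleftrightarrow> periodic N q1 \<and> periodic N q2 \<and> (\<forall>k\<in>{1,2,3}. \<forall>i j. 0 < phase k q1 q2 i j)"
proof -
  have "0 < 1 - x - y \<longleftrightarrow> x + y < 1" for x y :: real by linarith
  then show ?thesis unfolding inGibbs_def phase_def by auto
qed

lemma periodic_phase: "periodic N q1 \<Longrightarrow> periodic N q2 \<Longrightarrow> periodic N (phase k q1 q2)"
  unfolding phase_def by (rule periodicI) (simp_all add: periodicD_x periodicD_y)

lemma phase_sum: "phase 1 q1 q2 i j + phase 2 q1 q2 i j + phase 3 q1 q2 i j = 1"
  unfolding phase_def by simp

lemma exists_large_other_phase:
  assumes "a \<in> {1,2,3}" "phase a q1 q2 i j \<le> 1/2"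
  shows "\<exists>b\<in>{1,2,3}. b \<noteq> a \<and> 1/4 \<le> phase b q1 q2 i j"
proof -
  note s = phase_sum[of q1 q2 i j]
  consider "a = 1" | "a = 2" | "a = 3" using assms(1) by auto
  then show ?thesis
  proof cases
    case 1 then show ?thesis using assms(2) s
      by (cases "1/4 \<le> phase 2 q1 q2 i j") (auto intro: bexI[of _ 2] bexI[of _ 3])
  next
    case 2 then show ?thesis using assms(2) s
      by (cases "1/4 \<le> phase 1 q1 q2 i j") (auto intro: bexI[of _ 1] bexI[of _ 3])
  next
    case 3 then show ?thesis using assms(2) s
      by (cases "1/4 \<le> phase 1 q1 q2 i j") (auto intro: bexI[of _ 1] bexI[of _ 2])
  qed
qed

lemma transfer_add_scaled:
  assumes "a \<in> {1,2,3}" "b \<in> {1,2,3}" "a \<noteq> b" "k \<in> {1,2,3}"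
  shows "phase k (\<lambda>i j. q1 i j + s * (transfer a b 1 * V i j)) (\<lambda>i j. q2 i j + s * (transfer a b 2 * V i j)) i j
    = phase k q1 q2 i j + s * transfer a b k * V i j"
  using assms unfolding phase_def transfer_def by (auto simp: algebra_simps)

lemma abs_transfer_le: "\<bar>transfer a b k\<bar> \<le> 1"
  unfolding transfer_def by auto

text \<open>The margin needed to push the minimiser off the boundary of the Gibbs triangle: the
  logarithmic singularity \<open>ln \<delta>\<close> beats any bounded remainder.\<close>

lemma exists_small_log_margin:
  fixes c :: "'a \<Rightarrow> real"
  assumes "0 < cmin" "\<And>k. cmin \<le> c k \<and> c k \<le> cmax" "0 < m"
  shows "\<exists>\<delta>>0. \<delta> \<le> 1/8 \<and> \<delta> < m \<and> (\<forall>a b. c a * (ln \<delta> - ln m) + c b * ln 4 + B < 0)"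
proof -
  define X where "X = (\<bar>cmax\<bar> * ln 4 + \<bar>B\<bar> + 1) / cmin"
  define \<delta> where "\<delta> = min (min (1/8) (m / 2)) (exp (ln m - X))"
  have \<delta>: "0 < \<delta>" "\<delta> \<le> 1/8" "\<delta> < m" unfolding \<delta>_def using assms(3) by auto
  have "ln \<delta> \<le> ln (exp (ln m - X))" using \<delta>(1) unfolding \<delta>_def by (subst ln_le_cancel_iff) auto
  then have neg: "ln \<delta> - ln m \<le> - X" by simp
  have "c a * (ln \<delta> - ln m) + c b * ln 4 + B < 0" for a b
  proof -
    have "c a * (ln \<delta> - ln m) \<le> cmin * (ln \<delta> - ln m)"
      using assms(2)[of a] \<delta> by (intro mult_right_mono_neg) simp_all
    also have "\<dots> \<le> cmin * (- X)" using neg assms(1) by (intro mult_left_mono) simp_all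
    also have "\<dots> = - (\<bar>cmax\<bar> * ln 4 + \<bar>B\<bar> + 1)" unfolding X_def using assms(1) by simp
    finally have "c a * (ln \<delta> - ln m) \<le> - (\<bar>cmax\<bar> * ln 4 + \<bar>B\<bar> + 1)" .
    moreover have "c b * ln 4 \<le> \<bar>cmax\<bar> * ln 4"
      using assms(2)[of b] abs_ge_self[of cmax] by (intro mult_right_mono) auto
    ultimately show ?thesis by linarith
  qed
  then show ?thesis using \<delta> by blast
qed

section \<open>The scheme as a variational problem\<close>

locale bdf2_data =
  fixes P :: model and N :: nat and h dt A1 A2 :: real and p1o p2o p1c p2c :: grid
  assumes valid: "valid_model P" and N_ge_1: "N \<ge> 1" and h_pos: "h > 0" and dt_pos: "dt > 0"
    and A1_nonneg: "A1 \<ge> 0" and A2_nonneg: "A2 \<ge> 0"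
    and Gibbs_old: "inGibbs N p1o p2o" and Gibbs_cur: "inGibbs N p1c p2c"
    and mass1: "gsum N p1o = gsum N p1c" and mass2: "gsum N p2o = gsum N p2c"
begin

lemma M0_pos: "M0 P > 0" and N0_pos: "N0 P > 0" and mob_pos: "mob1 P > 0" "mob2 P > 0"
  using valid unfolding valid_model_def by auto

lemma periodic_data: "periodic N p1c" "periodic N p2c" "periodic N p1o" "periodic N p2o"
  using Gibbs_cur Gibbs_old unfolding inGibbs_def by auto

lemma cur_range: "0 < p1c i j" "0 < p2c i j" "p1c i j + p2c i j < 1"
  using Gibbs_cur unfolding inGibbs_def by auto

definition dH1 :: grid where "dH1 = (\<lambda>i j. dHa P (2 * p1c i j - p1o i j) (2 * p2c i j - p2o i j))"
definition dH2 :: grid where "dH2 = (\<lambda>i j. dHb P (2 * p1c i j - p1o i j) (2 * p2c i j - p2o i j))"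

definition mu1 :: "grid \<Rightarrow> grid \<Rightarrow> grid" where
  "mu1 q1 q2 = (\<lambda>i j. dG1 P h q1 q2 i j + dH1 i j - A1 * dt * lap h (\<lambda>i j. q1 i j - p1c i j) i j)"
definition mu2 :: "grid \<Rightarrow> grid \<Rightarrow> grid" where
  "mu2 q1 q2 = (\<lambda>i j. dG2 P h q1 q2 i j + dH2 i j - A2 * dt * lap h (\<lambda>i j. q2 i j - p2c i j) i j)"

lemma bdf2_step_iff:
  "bdf2_step P h dt A1 A2 p1o p2o p1c p2c q1 q2 \<longleftrightarrow>
    (\<forall>i j. (3 * q1 i j - 4 * p1c i j + p1o i j) / (2 * dt) = mob1 P * lap h (mu1 q1 q2) i j) \<and>
    (\<forall>i j. (3 * q2 i j - 4 * p2c i j + p2o i j) / (2 * dt) = mob2 P * lap h (mu2 q1 q2) i j)"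
  unfolding bdf2_step_def Let_def mu1_def mu2_def dH1_def dH2_def ..

lemma periodic_dH: "periodic N dH1" "periodic N dH2"
  unfolding dH1_def dH2_def using periodic_data by (rule_tac periodicI; simp add: periodicD_x periodicD_y)+

lemma periodic_mu:
  assumes "periodic N q1" "periodic N q2"
  shows "periodic N (mu1 q1 q2)" "periodic N (mu2 q1 q2)"
proof -
  have u3: "periodic N (\<lambda>i j. 1 - q1 i j - q2 i j)" using assms by (intro periodic_diff periodic_const)
  have dS: "periodic N (\<lambda>i j. dSa P (q1 i j) (q2 i j))" "periodic N (\<lambda>i j. dSb P (q1 i j) (q2 i j))"
    using assms by (rule periodic_comp2)+
  show "periodic N (mu1 q1 q2)" "periodic N (mu2 q1 q2)"
    unfolding mu1_def mu2_def dG1_def dG2_def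
    by (intro periodic_add periodic_diff periodic_cmult periodic_Top periodic_lap u3 dS assms periodic_data
        periodic_dH)+
qed

text \<open>The functional whose directional derivative in the direction \<open>(d\<^sub>1, d\<^sub>2)\<close> is
  \<open>\<langle>\<mu>\<^sub>1, d\<^sub>1\<rangle> + \<langle>\<mu>\<^sub>2, d\<^sub>2\<rangle>\<close>: the convex part of \<open>G\<^sub>h\<close>, the linearised concave part and the
  artificial regularisation.\<close>

definition step_energy :: "grid \<Rightarrow> grid \<Rightarrow> real" where
  "step_energy q1 q2 = gsum N (\<lambda>i j. entropy P (q1 i j) (q2 i j))
     + (eps1 P)\<^sup>2 * gradient_energy N h q1 + (eps2 P)\<^sup>2 * gradient_energy N h q2
     + (eps3 P)\<^sup>2 * gradient_energy N h (\<lambda>i j. 1 - q1 i j - q2 i j)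
     + gsum N (\<lambda>i j. dH1 i j * q1 i j) + gsum N (\<lambda>i j. dH2 i j * q2 i j)
     + A1 * dt / 2 * dirichlet N h (\<lambda>i j. q1 i j - p1c i j) (\<lambda>i j. q1 i j - p1c i j)
     + A2 * dt / 2 * dirichlet N h (\<lambda>i j. q2 i j - p2c i j) (\<lambda>i j. q2 i j - p2c i j)"

lemma step_energy_directional_deriv:
  assumes p1: "periodic N q1" and p2: "periodic N q2" and pd1: "periodic N d1" and pd2: "periodic N d2"
    and pos: "\<And>i j. q1 i j > 0 \<and> q2 i j > 0 \<and> q1 i j + q2 i j < 1"
  shows "((\<lambda>s. step_energy (\<lambda>i j. q1 i j + s * d1 i j) (\<lambda>i j. q2 i j + s * d2 i j)) has_real_derivative
     gsum N (\<lambda>i j. mu1 q1 q2 i j * d1 i j + mu2 q1 q2 i j * d2 i j)) (at 0)"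
proof -
  let ?u3 = "\<lambda>i j. 1 - q1 i j - q2 i j" and ?d3 = "\<lambda>i j. - d1 i j - d2 i j"
  let ?e1 = "\<lambda>i j. q1 i j - p1c i j" and ?e2 = "\<lambda>i j. q2 i j - p2c i j"
  have pu3: "periodic N ?u3" and pd3: "periodic N ?d3"
    and pe1: "periodic N ?e1" and pe2: "periodic N ?e2"
    by (rule periodicI; simp add: periodicD_x periodicD_y p1 p2 pd1 pd2 periodic_data)+
  have affine: "(\<lambda>i j. 1 - (q1 i j + s * d1 i j) - (q2 i j + s * d2 i j)) = (\<lambda>i j. ?u3 i j + s * ?d3 i j)"
    "(\<lambda>i j. (q1 i j + s * d1 i j) - p1c i j) = (\<lambda>i j. ?e1 i j + s * d1 i j)"
    "(\<lambda>i j. (q2 i j + s * d2 i j) - p2c i j) = (\<lambda>i j. ?e2 i j + s * d2 i j)" for s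
    by (simp_all add: algebra_simps)
  define D where "D = gsum N (\<lambda>i j. dSa P (q1 i j) (q2 i j) * d1 i j + dSb P (q1 i j) (q2 i j) * d2 i j)
     + (eps1 P)\<^sup>2 * gsum N (\<lambda>i j. Top h q1 i j * d1 i j) + (eps2 P)\<^sup>2 * gsum N (\<lambda>i j. Top h q2 i j * d2 i j)
     + (eps3 P)\<^sup>2 * gsum N (\<lambda>i j. Top h ?u3 i j * ?d3 i j)
     + gsum N (\<lambda>i j. dH1 i j * d1 i j) + gsum N (\<lambda>i j. dH2 i j * d2 i j)
     + A1 * dt / 2 * (2 * dirichlet N h ?e1 d1) + A2 * dt / 2 * (2 * dirichlet N h ?e2 d2)"
  have "((\<lambda>s. step_energy (\<lambda>i j. q1 i j + s * d1 i j) (\<lambda>i j. q2 i j + s * d2 i j)) has_real_derivative D) (at 0)"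
    unfolding step_energy_def affine dirichlet_add_scaled D_def
    using M0_pos N0_pos pos p1 p2 pd1 pd2 pu3 pd3
    by (intro DERIV_add DERIV_cmult DERIV_gsum entropy_directional_deriv gradient_energy_directional_deriv
        DERIV_quadratic_at_0 DERIV_cmult_affine_at_0) (auto simp: less_diff_eq add.commute)
  moreover have "D = gsum N (\<lambda>i j. mu1 q1 q2 i j * d1 i j + mu2 q1 q2 i j * d2 i j)"
  proof -
    have "dirichlet N h ?e1 d1 = - gsum N (\<lambda>i j. d1 i j * lap h ?e1 i j)"
      "dirichlet N h ?e2 d2 = - gsum N (\<lambda>i j. d2 i j * lap h ?e2 i j)"
      using gsum_mult_lap[OF pd1 pe1, of h] gsum_mult_lap[OF pd2 pe2, of h] dirichlet_commute[of N h]
      by simp_all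
    moreover have "gsum N (\<lambda>i j. mu1 q1 q2 i j * d1 i j + mu2 q1 q2 i j * d2 i j)
      = gsum N (\<lambda>i j. dSa P (q1 i j) (q2 i j) * d1 i j + dSb P (q1 i j) (q2 i j) * d2 i j)
       + (eps1 P)\<^sup>2 * gsum N (\<lambda>i j. Top h q1 i j * d1 i j) + (eps2 P)\<^sup>2 * gsum N (\<lambda>i j. Top h q2 i j * d2 i j)
       + (eps3 P)\<^sup>2 * gsum N (\<lambda>i j. Top h ?u3 i j * ?d3 i j)
       + gsum N (\<lambda>i j. dH1 i j * d1 i j) + gsum N (\<lambda>i j. dH2 i j * d2 i j)
       - A1 * dt * gsum N (\<lambda>i j. d1 i j * lap h ?e1 i j) - A2 * dt * gsum N (\<lambda>i j. d2 i j * lap h ?e2 i j)"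
      unfolding gsum_linear[symmetric] mu1_def mu2_def dG1_def dG2_def by (simp add: algebra_simps)
    ultimately show ?thesis unfolding D_def by simp
  qed
  ultimately show ?thesis by simp
qed

text \<open>For \<open>\<phi>\<^sub>i = \<phi>\<^sub>i\<^sup>n + \<Delta>\<^sub>h w\<^sub>i\<close> the BDF2 difference is \<open>3 \<Delta>\<^sub>h w\<^sub>i + (\<phi>\<^sub>i\<^sup>n - \<phi>\<^sub>i\<^sup>n\<^sup>-\<^sup>1)\<close>, so the
  scheme reads \<open>\<Delta>\<^sub>h (\<mu>\<^sub>i - c\<^sub>i w\<^sub>i) + g\<^sub>i = 0\<close> with the constants below.\<close>

definition c1 :: real where "c1 = 3 / (2 * dt * mob1 P)"
definition c2 :: real where "c2 = 3 / (2 * dt * mob2 P)"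
definition g1 :: grid where "g1 = (\<lambda>i j. (p1c i j - p1o i j) / (2 * dt * mob1 P))"
definition g2 :: grid where "g2 = (\<lambda>i j. (p2c i j - p2o i j) / (2 * dt * mob2 P))"
definition phi1 :: "grid \<Rightarrow> grid" where "phi1 w = (\<lambda>i j. p1c i j + lap h w i j)"
definition phi2 :: "grid \<Rightarrow> grid" where "phi2 w = (\<lambda>i j. p2c i j + lap h w i j)"

definition J :: "grid \<Rightarrow> grid \<Rightarrow> real" where
  "J w1 w2 = step_energy (phi1 w1) (phi2 w2) + c1 / 2 * dirichlet N h w1 w1 + c2 / 2 * dirichlet N h w2 w2
     + gsum N (\<lambda>i j. g1 i j * w1 i j) + gsum N (\<lambda>i j. g2 i j * w2 i j)"

lemma c_pos: "c1 > 0" "c2 > 0"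
  unfolding c1_def c2_def using mob_pos dt_pos by simp_all

lemma periodic_g: "periodic N g1" "periodic N g2"
  unfolding g1_def g2_def using periodic_data by (rule_tac periodicI; simp add: periodicD_x periodicD_y)+

lemma gsum_g: "gsum N g1 = 0" "gsum N g2 = 0"
  unfolding g1_def g2_def gsum_divide gsum_diff using mass1 mass2 by simp_all

lemma periodic_phi: "periodic N w \<Longrightarrow> periodic N (phi1 w)" "periodic N w \<Longrightarrow> periodic N (phi2 w)"
  unfolding phi1_def phi2_def by (intro periodic_add periodic_lap periodic_data; assumption)+

lemma phi_add_scaled:
  "phi1 (\<lambda>i j. w i j + s * v i j) = (\<lambda>i j. phi1 w i j + s * lap h v i j)"
  "phi2 (\<lambda>i j. w i j + s * v i j) = (\<lambda>i j. phi2 w i j + s * lap h v i j)"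
  unfolding phi1_def phi2_def lap_add_scaled by (simp_all add: algebra_simps)

lemma phi_diff_const: "phi1 (\<lambda>i j. w i j - c) = phi1 w" "phi2 (\<lambda>i j. w i j - c) = phi2 w"
  unfolding phi1_def phi2_def lap_diff_const by simp_all

lemma phi_zero: "phi1 (\<lambda>i j. 0) = p1c" "phi2 (\<lambda>i j. 0) = p2c"
  unfolding phi1_def phi2_def lap_def dx_def dy_def Dx_def Dy_def by simp_all

definition psi1 :: grid where "psi1 = (SOME \<psi>. periodic N \<psi> \<and> (\<forall>i j. lap h \<psi> i j = g1 i j))"
definition psi2 :: grid where "psi2 = (SOME \<psi>. periodic N \<psi> \<and> (\<forall>i j. lap h \<psi> i j = g2 i j))"

lemma psi: "periodic N psi1" "lap h psi1 i j = g1 i j" "periodic N psi2" "lap h psi2 i j = g2 i j"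
  using someI_ex[OF discrete_poisson_solvable[OF h_pos N_ge_1 periodic_g(1) gsum_g(1)]]
    someI_ex[OF discrete_poisson_solvable[OF h_pos N_ge_1 periodic_g(2) gsum_g(2)]]
  unfolding psi1_def psi2_def by blast+

definition res1 :: "grid \<Rightarrow> grid \<Rightarrow> grid" where
  "res1 w1 w2 = (\<lambda>i j. mu1 (phi1 w1) (phi2 w2) i j - c1 * w1 i j + psi1 i j)"
definition res2 :: "grid \<Rightarrow> grid \<Rightarrow> grid" where
  "res2 w1 w2 = (\<lambda>i j. mu2 (phi1 w1) (phi2 w2) i j - c2 * w2 i j + psi2 i j)"

lemma periodic_res:
  assumes "periodic N w1" "periodic N w2"
  shows "periodic N (res1 w1 w2)" "periodic N (res2 w1 w2)"
  unfolding res1_def res2_def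
  by (intro periodic_add periodic_diff periodic_cmult periodic_mu periodic_phi assms psi)+

lemma lap_res:
  "lap h (res1 w1 w2) i j = lap h (mu1 (phi1 w1) (phi2 w2)) i j - c1 * lap h w1 i j + g1 i j"
  "lap h (res2 w1 w2) i j = lap h (mu2 (phi1 w1) (phi2 w2)) i j - c2 * lap h w2 i j + g2 i j"
  unfolding res1_def res2_def
  using lap_add_scaled[of h "\<lambda>i j. mu1 (phi1 w1) (phi2 w2) i j - c1 * w1 i j" 1 psi1]
    lap_add_scaled[of h "\<lambda>i j. mu2 (phi1 w1) (phi2 w2) i j - c2 * w2 i j" 1 psi2]
    lap_add_scaled[of h "mu1 (phi1 w1) (phi2 w2)" "- c1" w1] lap_add_scaled[of h "mu2 (phi1 w1) (phi2 w2)" "- c2" w2]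
  by (simp_all add: psi)

lemma J_directional_deriv:
  assumes pw: "periodic N w1" "periodic N w2" and pv: "periodic N v1" "periodic N v2"
    and pos: "\<And>i j. phi1 w1 i j > 0 \<and> phi2 w2 i j > 0 \<and> phi1 w1 i j + phi2 w2 i j < 1"
  shows "((\<lambda>s. J (\<lambda>i j. w1 i j + s * v1 i j) (\<lambda>i j. w2 i j + s * v2 i j)) has_real_derivative
     gsum N (\<lambda>i j. res1 w1 w2 i j * lap h v1 i j + res2 w1 w2 i j * lap h v2 i j)) (at 0)"
proof -
  let ?m1 = "mu1 (phi1 w1) (phi2 w2)" and ?m2 = "mu2 (phi1 w1) (phi2 w2)"
  have "((\<lambda>s. J (\<lambda>i j. w1 i j + s * v1 i j) (\<lambda>i j. w2 i j + s * v2 i j)) has_real_derivative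
     gsum N (\<lambda>i j. ?m1 i j * lap h v1 i j + ?m2 i j * lap h v2 i j)
      + c1 / 2 * (2 * dirichlet N h w1 v1) + c2 / 2 * (2 * dirichlet N h w2 v2)
      + gsum N (\<lambda>i j. g1 i j * v1 i j) + gsum N (\<lambda>i j. g2 i j * v2 i j)) (at 0)"
    unfolding J_def phi_add_scaled dirichlet_add_scaled gsum_mult_add_scaled
    by (intro DERIV_add DERIV_cmult step_energy_directional_deriv DERIV_quadratic_at_0 DERIV_affine_at_0
        periodic_phi periodic_lap pw pv pos)
  moreover have "dirichlet N h w1 v1 = - gsum N (\<lambda>i j. w1 i j * lap h v1 i j)"
    "dirichlet N h w2 v2 = - gsum N (\<lambda>i j. w2 i j * lap h v2 i j)"
    using gsum_mult_lap[OF pw(1) pv(1)] gsum_mult_lap[OF pw(2) pv(2)] by simp_all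
  moreover have "gsum N (\<lambda>i j. g1 i j * v1 i j) = gsum N (\<lambda>i j. psi1 i j * lap h v1 i j)"
    "gsum N (\<lambda>i j. g2 i j * v2 i j) = gsum N (\<lambda>i j. psi2 i j * lap h v2 i j)"
    using gsum_lap_symmetric[OF psi(1) pv(1), of h] gsum_lap_symmetric[OF psi(3) pv(2), of h]
    by (simp_all add: psi)
  moreover have "gsum N (\<lambda>i j. res1 w1 w2 i j * lap h v1 i j + res2 w1 w2 i j * lap h v2 i j)
    = gsum N (\<lambda>i j. ?m1 i j * lap h v1 i j + ?m2 i j * lap h v2 i j)
      - c1 * gsum N (\<lambda>i j. w1 i j * lap h v1 i j) - c2 * gsum N (\<lambda>i j. w2 i j * lap h v2 i j)
      + gsum N (\<lambda>i j. psi1 i j * lap h v1 i j) + gsum N (\<lambda>i j. psi2 i j * lap h v2 i j)"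
    unfolding gsum_linear[symmetric] res1_def res2_def by (simp add: algebra_simps)
  ultimately show ?thesis by simp
qed

lemma J_deriv_transfer:
  assumes pw: "periodic N w1" "periodic N w2" and pV: "periodic N V"
    and pos: "\<And>i j. phi1 w1 i j > 0 \<and> phi2 w2 i j > 0 \<and> phi1 w1 i j + phi2 w2 i j < 1"
  shows "((\<lambda>s. J (\<lambda>i j. w1 i j + s * (transfer a b 1 * V i j)) (\<lambda>i j. w2 i j + s * (transfer a b 2 * V i j)))
     has_real_derivative gsum N (\<lambda>i j. (transfer a b 1 * res1 w1 w2 i j + transfer a b 2 * res2 w1 w2 i j)
       * lap h V i j)) (at 0)"
  using J_directional_deriv[OF pw periodic_cmult[OF pV, of "transfer a b 1"]
      periodic_cmult[OF pV, of "transfer a b 2"] pos, unfolded lap_cmult]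
  by (simp add: algebra_simps)

section \<open>Existence of a minimiser on the truncated domain\<close>

definition admissible :: "real \<Rightarrow> (grid \<times> grid) set" where
  "admissible \<delta> = {p. periodic N (fst p) \<and> periodic N (snd p) \<and>
     (\<forall>k\<in>{1,2,3}. \<forall>i j. \<delta> \<le> phase k (phi1 (fst p)) (phi2 (snd p)) i j)}"

lemma admissible_iff:
  "(w1, w2) \<in> admissible \<delta> \<longleftrightarrow> periodic N w1 \<and> periodic N w2 \<and>
     (\<forall>k\<in>{1,2,3}. \<forall>i j. \<delta> \<le> phase k (phi1 w1) (phi2 w2) i j)"
  unfolding admissible_def by simp

lemma admissible_Gibbs:
  assumes "\<delta> > 0" "(w1, w2) \<in> admissible \<delta>"
  shows "inGibbs N (phi1 w1) (phi2 w2)"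
  using assms unfolding admissible_iff inGibbs_iff_phase by (auto intro: periodic_phi less_le_trans)

lemma admissible_pos:
  "\<delta> > 0 \<Longrightarrow> (w1, w2) \<in> admissible \<delta> \<Longrightarrow> phi1 w1 i j > 0 \<and> phi2 w2 i j > 0 \<and> phi1 w1 i j + phi2 w2 i j < 1"
  using admissible_Gibbs unfolding inGibbs_def by blast

lemma zero_admissible_iff: "((\<lambda>i j. 0), (\<lambda>i j. 0)) \<in> admissible \<delta> \<longleftrightarrow>
    (\<forall>k\<in>{1,2,3}. \<forall>i j. \<delta> \<le> phase k p1c p2c i j)"
  unfolding admissible_iff phi_zero by (simp add: periodic_const)

lemma admissible_diff_const:
  "(w1, w2) \<in> admissible \<delta> \<Longrightarrow> ((\<lambda>i j. w1 i j - a), (\<lambda>i j. w2 i j - b)) \<in> admissible \<delta>"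
  unfolding admissible_iff phi_diff_const by (auto intro: periodic_diff periodic_const)

lemma J_diff_const: "J (\<lambda>i j. w1 i j - a) (\<lambda>i j. w2 i j - b) = J w1 w2"
proof -
  have "gsum N (\<lambda>i j. g i j * (w i j - c)) = gsum N (\<lambda>i j. g i j * w i j)" if "gsum N g = 0" for g w c
    using that unfolding right_diff_distrib gsum_diff gsum_multc by simp
  then show ?thesis unfolding J_def phi_diff_const dirichlet_diff_const using gsum_g by simp
qed

text \<open>On the truncated domain \<open>\<Delta>\<^sub>h w\<^sub>i = \<phi>\<^sub>i - \<phi>\<^sub>i\<^sup>n\<close> is bounded by \<open>1\<close>.\<close>

definition box_radius :: real where "box_radius = 4 * real N ^ 4 * h\<^sup>2"

lemma admissible_normalised_bounded:
  assumes "\<delta> > 0" "(w1, w2) \<in> admissible \<delta>" "w1 1 1 = 0" "w2 1 1 = 0"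
  shows "\<bar>w1 i j\<bar> \<le> box_radius \<and> \<bar>w2 i j\<bar> \<le> box_radius"
proof -
  have per: "periodic N w1" "periodic N w2" using assms(2) unfolding admissible_iff by auto
  have "\<bar>lap h w1 i j\<bar> \<le> 1 \<and> \<bar>lap h w2 i j\<bar> \<le> 1" for i j
    using admissible_pos[OF assms(1,2), of i j] cur_range[of i j] unfolding phi1_def phi2_def
    by (simp add: abs_le_iff)
  then show ?thesis unfolding box_radius_def
    using bounded_by_lap_bound[OF h_pos N_ge_1 per(1) assms(3), of 1]
      bounded_by_lap_bound[OF h_pos N_ge_1 per(2) assms(4), of 1] by simp
qed

lemma continuous_on_phi [continuous_intros]:
  "continuous_on S (\<lambda>p::grid \<times> grid. phi1 (fst p) i j)"
  "continuous_on S (\<lambda>p::grid \<times> grid. phi2 (snd p) i j)"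
  unfolding phi1_def phi2_def by (intro continuous_intros continuous_on_lap)+

lemma closed_admissible: "closed (admissible \<delta>)"
proof -
  have "admissible \<delta> = {p. periodic N (fst p)} \<inter> {p. periodic N (snd p)} \<inter>
      {p. \<forall>i j. \<delta> \<le> phi1 (fst p) i j \<and> \<delta> \<le> phi2 (snd p) i j \<and> \<delta> \<le> 1 - phi1 (fst p) i j - phi2 (snd p) i j}"
    unfolding admissible_def phase_def by auto
  also have "closed \<dots>" unfolding periodic_def
    by (intro closed_Int closed_Collect_all closed_Collect_conj closed_Collect_eq closed_Collect_le
        continuous_intros)
  finally show ?thesis .
qed

lemma continuous_on_J:
  assumes "\<delta> > 0"
  shows "continuous_on (admissible \<delta>) (\<lambda>p. J (fst p) (snd p))"
proof -
  have pos: "phi1 (fst p) i j > 0" "phi2 (snd p) i j > 0" "1 - phi1 (fst p) i j - phi2 (snd p) i j > 0"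
    if "p \<in> admissible \<delta>" for p i j
    using admissible_pos[OF assms, of "fst p" "snd p" i j] that by auto
  show ?thesis
    unfolding J_def step_energy_def gradient_energy_def entropy_def kappa_def dirichlet_def gsum_def
    apply (intro continuous_intros continuous_on_Ax continuous_on_Ay continuous_on_Dx continuous_on_Dy)
    using pos M0_pos N0_pos alpha_pos[OF M0_pos N0_pos] beta_pos[OF M0_pos N0_pos]
    by (auto simp: Ax_pos Ay_pos less_imp_neq[symmetric] dest!: Ax_pos Ay_pos)
qed

lemma J_attains_min:
  assumes "\<delta> > 0" "((\<lambda>i j. 0), (\<lambda>i j. 0)) \<in> admissible \<delta>"
  obtains w1 w2 where "(w1, w2) \<in> admissible \<delta>" "\<And>v1 v2. (v1, v2) \<in> admissible \<delta> \<Longrightarrow> J w1 w2 \<le> J v1 v2"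
    "\<And>i j. \<bar>w1 i j\<bar> \<le> box_radius" "\<And>i j. \<bar>w2 i j\<bar> \<le> box_radius"
proof -
  define K where "K = admissible \<delta> \<inter> {p. fst p 1 1 = 0 \<and> snd p 1 1 = 0}
    \<inter> {p. \<forall>i j. \<bar>fst p i j\<bar> \<le> box_radius \<and> \<bar>snd p i j\<bar> \<le> box_radius}"
  have "compact K" unfolding K_def
    by (intro closed_Int_compact closed_Int closed_admissible compact_grid_box2 closed_Collect_conj
        closed_Collect_eq continuous_intros)
  moreover have "((\<lambda>i j. 0), (\<lambda>i j. 0)) \<in> K" using assms(2) unfolding K_def box_radius_def by simp
  moreover have "continuous_on K (\<lambda>p. J (fst p) (snd p))"
    unfolding K_def by (rule continuous_on_subset[OF continuous_on_J[OF assms(1)]]) auto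
  ultimately obtain p where pK: "p \<in> K" and pmin: "\<And>q. q \<in> K \<Longrightarrow> J (fst p) (snd p) \<le> J (fst q) (snd q)"
    using continuous_attains_inf[of K "\<lambda>p. J (fst p) (snd p)"] by blast
  show ?thesis
  proof (rule that[of "fst p" "snd p"])
    show "(fst p, snd p) \<in> admissible \<delta>" "\<bar>fst p i j\<bar> \<le> box_radius" "\<bar>snd p i j\<bar> \<le> box_radius" for i j
      using pK unfolding K_def by auto
    fix v1 v2 assume v: "(v1, v2) \<in> admissible \<delta>"
    let ?v' = "((\<lambda>i j. v1 i j - v1 1 1), (\<lambda>i j. v2 i j - v2 1 1))"
    have v': "?v' \<in> admissible \<delta>" by (rule admissible_diff_const[OF v])
    then have "?v' \<in> K" unfolding K_def using admissible_normalised_bounded[OF assms(1) v'] by auto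
    then show "J (fst p) (snd p) \<le> J v1 v2" using pmin[of ?v'] by (simp add: J_diff_const)
  qed
qed

section \<open>The minimiser stays away from the boundary\<close>

text \<open>The logarithmic part of \<open>\<partial>S\<close> belonging to phase \<open>k\<close>: \<open>\<partial>\<^sub>aS = l\<^sub>1(\<phi>\<^sub>1) - l\<^sub>3(1 - \<phi>\<^sub>1 - \<phi>\<^sub>2)\<close>
  and \<open>\<partial>\<^sub>bS = l\<^sub>2(\<phi>\<^sub>2) - l\<^sub>3(1 - \<phi>\<^sub>1 - \<phi>\<^sub>2)\<close>.\<close>

definition log_coef :: "nat \<Rightarrow> real" where
  "log_coef k = (if k = 1 then 1 / M0 P else if k = 2 then 1 / N0 P else 1)"
definition log_scale :: "nat \<Rightarrow> real" where
  "log_scale k = (if k = 1 then alpha P / M0 P else if k = 2 then beta P / N0 P else 1)"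
definition log_part :: "nat \<Rightarrow> real \<Rightarrow> real" where
  "log_part k t = log_coef k * ln (log_scale k * t) + log_coef k"

lemma log_coef_bounds: "0 < min (min (1 / M0 P) (1 / N0 P)) 1"
  "min (min (1 / M0 P) (1 / N0 P)) 1 \<le> log_coef k \<and> log_coef k \<le> max (max (1 / M0 P) (1 / N0 P)) 1"
  unfolding log_coef_def using M0_pos N0_pos by auto

lemma log_scale_pos: "log_scale k > 0"
  unfolding log_scale_def using M0_pos N0_pos alpha_pos[OF M0_pos N0_pos] beta_pos[OF M0_pos N0_pos] by auto

lemma log_part_mono: "0 < s \<Longrightarrow> s \<le> t \<Longrightarrow> log_part k s \<le> log_part k t"
proof -
  assume "0 < s" "s \<le> t"
  moreover have "0 \<le> log_coef k" using log_coef_bounds by (meson less_imp_le order_less_le_trans)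
  ultimately show ?thesis unfolding log_part_def using log_scale_pos[of k] by (simp add: mult_left_mono)
qed

lemma log_part_diff: "0 < s \<Longrightarrow> 0 < t \<Longrightarrow> log_part k t - log_part k s = log_coef k * (ln t - ln s)"
  unfolding log_part_def using log_scale_pos[of k] by (simp add: ln_mult algebra_simps)

definition rest1 :: "grid \<Rightarrow> grid \<Rightarrow> grid" where
  "rest1 w1 w2 = (\<lambda>i j. (eps1 P)\<^sup>2 * Top h (phi1 w1) i j
     - (eps3 P)\<^sup>2 * Top h (\<lambda>i j. 1 - phi1 w1 i j - phi2 w2 i j) i j
     + dH1 i j - A1 * dt * lap h (\<lambda>i j. phi1 w1 i j - p1c i j) i j - c1 * w1 i j + psi1 i j)"
definition rest2 :: "grid \<Rightarrow> grid \<Rightarrow> grid" where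
  "rest2 w1 w2 = (\<lambda>i j. (eps2 P)\<^sup>2 * Top h (phi2 w2) i j
     - (eps3 P)\<^sup>2 * Top h (\<lambda>i j. 1 - phi1 w1 i j - phi2 w2 i j) i j
     + dH2 i j - A2 * dt * lap h (\<lambda>i j. phi2 w2 i j - p2c i j) i j - c2 * w2 i j + psi2 i j)"

lemma transfer_res:
  assumes "a \<in> {1,2,3}" "b \<in> {1,2,3}" "a \<noteq> b"
  shows "transfer a b 1 * res1 w1 w2 i j + transfer a b 2 * res2 w1 w2 i j
    = log_part a (phase a (phi1 w1) (phi2 w2) i j) - log_part b (phase b (phi1 w1) (phi2 w2) i j)
      + (transfer a b 1 * rest1 w1 w2 i j + transfer a b 2 * rest2 w1 w2 i j)"
proof -
  let ?l = "\<lambda>k. log_part k (phase k (phi1 w1) (phi2 w2) i j)"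
  have "res1 w1 w2 i j = ?l 1 - ?l 3 + rest1 w1 w2 i j" "res2 w1 w2 i j = ?l 2 - ?l 3 + rest2 w1 w2 i j"
    unfolding res1_def res2_def rest1_def rest2_def mu1_def mu2_def dG1_def dG2_def dSa_def dSb_def
      log_part_def log_coef_def log_scale_def phase_def
    by (simp_all add: algebra_simps)
  then show ?thesis using assms unfolding transfer_def by (auto simp: algebra_simps)
qed

definition rest_bound :: real where
  "rest_bound = ((eps1 P)\<^sup>2 + (eps2 P)\<^sup>2 + 2 * (eps3 P)\<^sup>2) / h\<^sup>2
     + (gsum N (\<lambda>i j. \<bar>dH1 i j\<bar>) + gsum N (\<lambda>i j. \<bar>dH2 i j\<bar>)) + (A1 + A2) * dt * (8 / h\<^sup>2)
     + (c1 + c2) * box_radius + (gsum N (\<lambda>i j. \<bar>psi1 i j\<bar>) + gsum N (\<lambda>i j. \<bar>psi2 i j\<bar>))"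

lemma abs_rest_le:
  assumes G: "inGibbs N (phi1 w1) (phi2 w2)"
    and w: "\<And>i j. \<bar>w1 i j\<bar> \<le> box_radius" "\<And>i j. \<bar>w2 i j\<bar> \<le> box_radius"
  shows "\<bar>rest1 w1 w2 i j\<bar> \<le> rest_bound \<and> \<bar>rest2 w1 w2 i j\<bar> \<le> rest_bound"
proof -
  have pos: "\<And>i j. 0 < phi1 w1 i j" "\<And>i j. 0 < phi2 w2 i j" "\<And>i j. 0 < 1 - phi1 w1 i j - phi2 w2 i j"
    using G unfolding inGibbs_def by (auto simp: algebra_simps)
  have Top_bound: "\<bar>e\<^sup>2 * Top h u i j\<bar> \<le> e\<^sup>2 / h\<^sup>2" if "\<And>i j. 0 < u i j" for e u i j
    using mult_left_mono[OF abs_Top_le[OF that h_pos], of "e\<^sup>2"] by (simp add: abs_mult)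
  note Top = Top_bound[where u="phi1 w1", OF pos(1)] Top_bound[where u="phi2 w2", OF pos(2)]
    Top_bound[where u="\<lambda>i j. 1 - phi1 w1 i j - phi2 w2 i j", OF pos(3)]
  have e: "\<bar>phi1 w1 i j - p1c i j\<bar> \<le> 1" "\<bar>phi2 w2 i j - p2c i j\<bar> \<le> 1" for i j
    using pos(1,2,3)[of i j] cur_range[of i j] by (simp_all add: abs_le_iff)
  have "0 \<le> A1 * dt" "0 \<le> A2 * dt" using A1_nonneg A2_nonneg dt_pos by simp_all
  then have lap: "\<bar>A1 * dt * lap h (\<lambda>i j. phi1 w1 i j - p1c i j) i j\<bar> \<le> A1 * dt * (8 / h\<^sup>2)"
    "\<bar>A2 * dt * lap h (\<lambda>i j. phi2 w2 i j - p2c i j) i j\<bar> \<le> A2 * dt * (8 / h\<^sup>2)"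
    using mult_left_mono[OF abs_lap_le[where e="\<lambda>i j. phi1 w1 i j - p1c i j" and M=1, OF e(1) h_pos]]
      mult_left_mono[OF abs_lap_le[where e="\<lambda>i j. phi2 w2 i j - p2c i j" and M=1, OF e(2) h_pos]]
      A1_nonneg A2_nonneg dt_pos
    by (simp_all add: abs_mult)
  have cw: "\<bar>c1 * w1 i j\<bar> \<le> c1 * box_radius" "\<bar>c2 * w2 i j\<bar> \<le> c2 * box_radius"
    using w[of i j] c_pos by (simp_all add: abs_mult mult_left_mono)
  have H: "\<bar>dH1 i j\<bar> \<le> gsum N (\<lambda>i j. \<bar>dH1 i j\<bar>)" "\<bar>dH2 i j\<bar> \<le> gsum N (\<lambda>i j. \<bar>dH2 i j\<bar>)"
    and \<psi>: "\<bar>psi1 i j\<bar> \<le> gsum N (\<lambda>i j. \<bar>psi1 i j\<bar>)" "\<bar>psi2 i j\<bar> \<le> gsum N (\<lambda>i j. \<bar>psi2 i j\<bar>)"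
    using abs_le_gsum_abs[OF N_ge_1] periodic_dH psi by blast+
  have nonneg: "0 \<le> gsum N (\<lambda>i j. \<bar>f i j\<bar>)" for f by (rule gsum_nonneg) simp
  have "0 \<le> (eps1 P)\<^sup>2 / h\<^sup>2" "0 \<le> (eps2 P)\<^sup>2 / h\<^sup>2" "0 \<le> (eps3 P)\<^sup>2 / h\<^sup>2"
    "0 \<le> A1 * dt * (8 / h\<^sup>2)" "0 \<le> A2 * dt * (8 / h\<^sup>2)" "0 \<le> c1 * box_radius" "0 \<le> c2 * box_radius"
    using A1_nonneg A2_nonneg dt_pos c_pos unfolding box_radius_def by simp_all
  moreover have "rest_bound = (eps1 P)\<^sup>2 / h\<^sup>2 + (eps2 P)\<^sup>2 / h\<^sup>2 + (eps3 P)\<^sup>2 / h\<^sup>2 + (eps3 P)\<^sup>2 / h\<^sup>2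
      + gsum N (\<lambda>i j. \<bar>dH1 i j\<bar>) + gsum N (\<lambda>i j. \<bar>dH2 i j\<bar>) + A1 * dt * (8 / h\<^sup>2) + A2 * dt * (8 / h\<^sup>2)
      + c1 * box_radius + c2 * box_radius + gsum N (\<lambda>i j. \<bar>psi1 i j\<bar>) + gsum N (\<lambda>i j. \<bar>psi2 i j\<bar>)"
    unfolding rest_bound_def by (simp add: algebra_simps add_divide_distrib)
  moreover have "rest1 w1 w2 i j = (eps1 P)\<^sup>2 * Top h (phi1 w1) i j
     - (eps3 P)\<^sup>2 * Top h (\<lambda>i j. 1 - phi1 w1 i j - phi2 w2 i j) i j
     + dH1 i j - A1 * dt * lap h (\<lambda>i j. phi1 w1 i j - p1c i j) i j - c1 * w1 i j + psi1 i j"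
    "rest2 w1 w2 i j = (eps2 P)\<^sup>2 * Top h (phi2 w2) i j
     - (eps3 P)\<^sup>2 * Top h (\<lambda>i j. 1 - phi1 w1 i j - phi2 w2 i j) i j
     + dH2 i j - A2 * dt * lap h (\<lambda>i j. phi2 w2 i j - p2c i j) i j - c2 * w2 i j + psi2 i j"
    unfolding rest1_def rest2_def by simp_all
  ultimately show ?thesis
    using Top[of "eps1 P" i j] Top[of "eps2 P" i j] Top[of "eps3 P" i j] lap cw H \<psi> nonneg[of dH1] nonneg[of dH2]
      nonneg[of psi1] nonneg[of psi2]
    unfolding abs_le_iff by linarith
qed

lemma abs_transfer_rest_le:
  assumes "inGibbs N (phi1 w1) (phi2 w2)"
    and "\<And>i j. \<bar>w1 i j\<bar> \<le> box_radius" "\<And>i j. \<bar>w2 i j\<bar> \<le> box_radius"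
  shows "\<bar>transfer a b 1 * rest1 w1 w2 i j + transfer a b 2 * rest2 w1 w2 i j\<bar> \<le> 2 * rest_bound"
proof -
  have "\<bar>transfer a b k * rest1 w1 w2 i j\<bar> \<le> rest_bound" "\<bar>transfer a b k * rest2 w1 w2 i j\<bar> \<le> rest_bound"
    for k :: nat
    using mult_mono[OF abs_transfer_le conjunct1[OF abs_rest_le[OF assms]]]
      mult_mono[OF abs_transfer_le conjunct2[OF abs_rest_le[OF assms]]] by (simp_all add: abs_mult)
  then show ?thesis by (smt (verit, best) abs_triangle_ineq)
qed

lemma gsum_phase_phi:
  assumes "periodic N w1" "periodic N w2"
  shows "gsum N (phase k (phi1 w1) (phi2 w2)) = gsum N (phase k p1c p2c)"
proof -
  have "gsum N (phase k (phi1 w1) (phi2 w2)) = gsum N (phase k p1c p2c)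
      + gsum N (\<lambda>i j. if k = 1 then lap h w1 i j else if k = 2 then lap h w2 i j else - lap h w1 i j - lap h w2 i j)"
    unfolding gsum_add[symmetric] by (rule gsum_cong) (simp add: phase_def phi1_def phi2_def)
  moreover have "gsum N (\<lambda>i j. if k = 1 then lap h w1 i j else if k = 2 then lap h w2 i j
      else - lap h w1 i j - lap h w2 i j) = 0"
    using gsum_lap[OF assms(1)] gsum_lap[OF assms(2)]
    by (cases "k = 1"; cases "k = 2") (simp_all add: gsum_diff gsum_minus)
  ultimately show ?thesis by simp
qed

lemma exists_cell_phase_ge:
  assumes "periodic N w1" "periodic N w2" "\<And>i j. m \<le> phase a p1c p2c i j"
  obtains x y where "m \<le> phase a (phi1 w1) (phi2 w2) x y"
proof -
  have "real N * real N * m \<le> gsum N (phase a (phi1 w1) (phi2 w2))"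
    unfolding gsum_phase_phi[OF assms(1,2)] using assms(3) by (rule gsum_ge_const)
  then have "m \<le> gsum N (phase a (phi1 w1) (phi2 w2)) / (real N * real N)"
    using N_ge_1 by (simp add: field_simps)
  then show ?thesis using exists_ge_average[OF N_ge_1] that by (meson order_trans)
qed

lemma phase_phi_transfer:
  assumes "a \<in> {1,2,3}" "b \<in> {1,2,3}" "a \<noteq> b" "k \<in> {1,2,3}"
  shows "phase k (phi1 (\<lambda>i j. w1 i j + s * (transfer a b 1 * V i j)))
      (phi2 (\<lambda>i j. w2 i j + s * (transfer a b 2 * V i j))) i j
    = phase k (phi1 w1) (phi2 w2) i j + s * transfer a b k * lap h V i j"
proof -
  have "phase k (phi1 (\<lambda>i j. w1 i j + s * (transfer a b 1 * V i j)))
      (phi2 (\<lambda>i j. w2 i j + s * (transfer a b 2 * V i j))) i j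
    = phase k (\<lambda>i j. phi1 w1 i j + s * (transfer a b 1 * lap h V i j))
        (\<lambda>i j. phi2 w2 i j + s * (transfer a b 2 * lap h V i j)) i j"
    unfolding phi_add_scaled lap_cmult ..
  then show ?thesis unfolding transfer_add_scaled[OF assms] .
qed

lemma small_transfer_admissible:
  assumes w: "(w1, w2) \<in> admissible \<delta>" and ab: "a \<in> {1,2,3}" "b \<in> {1,2,3}" "a \<noteq> b"
    and V: "periodic N V"
    and margin: "\<And>k i j. k \<in> {1,2,3} \<Longrightarrow> \<delta> + e \<le> phase k (phi1 w1) (phi2 w2) i j"
    and small: "\<And>i j. \<bar>s\<bar> * \<bar>lap h V i j\<bar> \<le> e"
  shows "((\<lambda>i j. w1 i j + s * (transfer a b 1 * V i j)), (\<lambda>i j. w2 i j + s * (transfer a b 2 * V i j)))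
    \<in> admissible \<delta>"
  unfolding admissible_iff
proof (intro conjI ballI allI)
  have pw: "periodic N w1" "periodic N w2" using w unfolding admissible_iff by auto
  show "periodic N (\<lambda>i j. w1 i j + s * (transfer a b 1 * V i j))"
    "periodic N (\<lambda>i j. w2 i j + s * (transfer a b 2 * V i j))"
    by (intro periodic_add periodic_cmult pw V)+
  fix k :: nat and i j assume k: "k \<in> {1,2,3}"
  have "\<bar>s\<bar> * \<bar>transfer a b k\<bar> * \<bar>lap h V i j\<bar> \<le> \<bar>s\<bar> * 1 * \<bar>lap h V i j\<bar>"
    by (intro mult_right_mono mult_left_mono abs_transfer_le) simp_all
  then have "\<bar>s * transfer a b k * lap h V i j\<bar> \<le> \<bar>s\<bar> * \<bar>lap h V i j\<bar>" by (simp add: abs_mult)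
  then show "\<delta> \<le> phase k (phi1 (\<lambda>i j. w1 i j + s * (transfer a b 1 * V i j)))
      (phi2 (\<lambda>i j. w2 i j + s * (transfer a b 2 * V i j))) i j"
    unfolding phase_phi_transfer[OF ab k] using margin[OF k, of i j] small[of i j] by (simp add: abs_le_iff)
qed

lemma transfer_step_admissible:
  assumes w: "(w1, w2) \<in> admissible \<delta>" and ab: "a \<in> {1,2,3}" "b \<in> {1,2,3}" "a \<noteq> b"
    and V: "periodic N V" "\<And>i j. lap h V i j = kdelta N x0 y0 i j - kdelta N x1 y1 i j"
    and s: "0 \<le> s" "\<delta> + s \<le> phase b (phi1 w1) (phi2 w2) x0 y0" "\<delta> + s \<le> phase a (phi1 w1) (phi2 w2) x1 y1"
    and distinct: "phase a (phi1 w1) (phi2 w2) x0 y0 < phase a (phi1 w1) (phi2 w2) x1 y1"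
  shows "((\<lambda>i j. w1 i j + s * (transfer a b 1 * V i j)), (\<lambda>i j. w2 i j + s * (transfer a b 2 * V i j)))
    \<in> admissible \<delta>"
  unfolding admissible_iff
proof (intro conjI ballI allI)
  have pw: "periodic N w1" "periodic N w2" and base: "\<And>k i j. k \<in> {1,2,3} \<Longrightarrow> \<delta> \<le> phase k (phi1 w1) (phi2 w2) i j"
    using w unfolding admissible_iff by auto
  show "periodic N (\<lambda>i j. w1 i j + s * (transfer a b 1 * V i j))"
    "periodic N (\<lambda>i j. w2 i j + s * (transfer a b 2 * V i j))"
    by (intro periodic_add periodic_cmult pw V)+
  fix k :: nat and i j assume k: "k \<in> {1,2,3}"
  let ?ph = "\<lambda>k. phase k (phi1 w1) (phi2 w2)"
  have pph: "periodic N (?ph k)" for k :: nat using pw by (intro periodic_phase periodic_phi)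
  have eq: "phase k (phi1 (\<lambda>i j. w1 i j + s * (transfer a b 1 * V i j)))
      (phi2 (\<lambda>i j. w2 i j + s * (transfer a b 2 * V i j))) i j
    = ?ph k i j + s * transfer a b k * (kdelta N x0 y0 i j - kdelta N x1 y1 i j)"
    unfolding phase_phi_transfer[OF ab k] V(2) ..
  have "\<not> (kdelta N x0 y0 i j = 1 \<and> kdelta N x1 y1 i j = 1)"
    using kdelta_eq_1_imp_eq[OF pph] distinct by (metis less_irrefl)
  then consider (away) "kdelta N x0 y0 i j = 0" "kdelta N x1 y1 i j = 0"
    | (at0) "kdelta N x0 y0 i j = 1" "kdelta N x1 y1 i j = 0"
    | (at1) "kdelta N x0 y0 i j = 0" "kdelta N x1 y1 i j = 1"
    using kdelta_cases[of N x0 y0 i j] kdelta_cases[of N x1 y1 i j] by auto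
  then show "\<delta> \<le> phase k (phi1 (\<lambda>i j. w1 i j + s * (transfer a b 1 * V i j)))
      (phi2 (\<lambda>i j. w2 i j + s * (transfer a b 2 * V i j))) i j"
  proof cases
    case at0
    have "?ph k i j = ?ph k x0 y0" by (rule kdelta_eq_1_imp_eq[OF pph at0(1)])
    then show ?thesis unfolding eq using at0 base[OF k, of i j] s ab k
      by (cases "k = b") (auto simp: transfer_def)
  next
    case at1
    have "?ph k i j = ?ph k x1 y1" by (rule kdelta_eq_1_imp_eq[OF pph at1(2)])
    then show ?thesis unfolding eq using at1 base[OF k, of i j] s ab k
      by (cases "k = a") (auto simp: transfer_def)
  next
    case away
    show ?thesis unfolding eq using away base[OF k, of i j] by simp
  qed
qed

lemma transfer_deriv_neg:
  assumes "\<delta> > 0" and w: "(w1, w2) \<in> admissible \<delta>" "\<And>i j. \<bar>w1 i j\<bar> \<le> box_radius" "\<And>i j. \<bar>w2 i j\<bar> \<le> box_radius"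
    and ab: "a \<in> {1,2,3}" "b \<in> {1,2,3}" "a \<noteq> b"
    and V: "periodic N V" "\<And>i j. lap h V i j = kdelta N x0 y0 i j - kdelta N x1 y1 i j"
    and at0: "phase a (phi1 w1) (phi2 w2) x0 y0 \<le> \<delta>" "1/4 \<le> phase b (phi1 w1) (phi2 w2) x0 y0"
    and at1: "0 < m" "m \<le> phase a (phi1 w1) (phi2 w2) x1 y1"
    and margin: "log_coef a * (ln \<delta> - ln m) + log_coef b * ln 4 + 4 * rest_bound < 0"
  shows "gsum N (\<lambda>i j. (transfer a b 1 * res1 w1 w2 i j + transfer a b 2 * res2 w1 w2 i j) * lap h V i j) < 0"
proof -
  let ?R = "\<lambda>i j. transfer a b 1 * res1 w1 w2 i j + transfer a b 2 * res2 w1 w2 i j"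
  let ?r = "\<lambda>i j. transfer a b 1 * rest1 w1 w2 i j + transfer a b 2 * rest2 w1 w2 i j"
  let ?ph = "\<lambda>k. phase k (phi1 w1) (phi2 w2)"
  have pw: "periodic N w1" "periodic N w2" using w(1) unfolding admissible_iff by auto
  have G: "inGibbs N (phi1 w1) (phi2 w2)" by (rule admissible_Gibbs[OF assms(1) w(1)])
  then have ph_pos: "0 < ?ph k i j" if "k \<in> {1,2,3}" for k :: nat and i j using that unfolding inGibbs_iff_phase by auto
  have ph_le_1: "?ph k i j \<le> 1" if "k \<in> {1,2,3}" for k :: nat and i j
    using that ph_pos[of 1 i j] ph_pos[of 2 i j] ph_pos[of 3 i j] phase_sum[of "phi1 w1" "phi2 w2" i j] by auto
  have pR: "periodic N ?R" using periodic_res[OF pw] by (intro periodic_add periodic_cmult)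
  have "gsum N (\<lambda>i j. ?R i j * lap h V i j) = ?R x0 y0 - ?R x1 y1"
    unfolding V(2) right_diff_distrib gsum_diff gsum_mult_kdelta[OF N_ge_1 pR] ..
  also have "\<dots> = (log_part a (?ph a x0 y0) - log_part b (?ph b x0 y0))
      - (log_part a (?ph a x1 y1) - log_part b (?ph b x1 y1)) + (?r x0 y0 - ?r x1 y1)"
    unfolding transfer_res[OF ab] by simp
  also have "\<dots> \<le> (log_part a \<delta> - log_part b (1/4)) - (log_part a m - log_part b 1) + 4 * rest_bound"
  proof -
    have "\<bar>?r i j\<bar> \<le> 2 * rest_bound" for i j by (rule abs_transfer_rest_le[OF G w(2,3)])
    moreover have "log_part a (?ph a x0 y0) \<le> log_part a \<delta>"
      using log_part_mono[OF ph_pos[OF ab(1)] at0(1)] .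
    moreover have "log_part b (1/4) \<le> log_part b (?ph b x0 y0)"
      using log_part_mono[OF _ at0(2)] by simp
    moreover have "log_part a m \<le> log_part a (?ph a x1 y1)"
      using log_part_mono[OF at1] .
    moreover have "log_part b (?ph b x1 y1) \<le> log_part b 1"
      using log_part_mono[OF ph_pos[OF ab(2)] ph_le_1[OF ab(2)]] .
    ultimately show ?thesis unfolding abs_le_iff by (smt (verit))
  qed
  also have "\<dots> = log_coef a * (ln \<delta> - ln m) + log_coef b * ln 4 + 4 * rest_bound"
    using log_part_diff[OF \<open>0 < m\<close> \<open>\<delta> > 0\<close>, of a] log_part_diff[of "1/4" 1 b] by (simp add: ln_div)
  finally show ?thesis using margin by linarith
qed

lemma minimiser_interior:
  assumes \<delta>: "0 < \<delta>" "\<delta> \<le> 1/8" "\<delta> < m"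
    and m: "\<And>k i j. k \<in> {1,2,3} \<Longrightarrow> m \<le> phase k p1c p2c i j"
    and margin: "\<And>a b. log_coef a * (ln \<delta> - ln m) + log_coef b * ln 4 + 4 * rest_bound < 0"
    and w: "(w1, w2) \<in> admissible \<delta>" "\<And>i j. \<bar>w1 i j\<bar> \<le> box_radius" "\<And>i j. \<bar>w2 i j\<bar> \<le> box_radius"
    and min: "\<And>v1 v2. (v1, v2) \<in> admissible \<delta> \<Longrightarrow> J w1 w2 \<le> J v1 v2"
  shows "\<forall>k\<in>{1,2,3}. \<forall>i j. \<delta> < phase k (phi1 w1) (phi2 w2) i j"
proof (rule ccontr)
  let ?ph = "\<lambda>k. phase k (phi1 w1) (phi2 w2)"
  assume "\<not> ?thesis"
  then obtain a x0 y0 where a: "a \<in> {1,2,3}" and at0: "?ph a x0 y0 \<le> \<delta>" by (auto simp: not_less)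
  obtain b where b: "b \<in> {1,2,3}" "b \<noteq> a" and bx0: "1/4 \<le> ?ph b x0 y0"
    using exists_large_other_phase[OF a, of "phi1 w1" "phi2 w2" x0 y0] at0 \<delta> by auto
  have pw: "periodic N w1" "periodic N w2" using w(1) unfolding admissible_iff by auto
  obtain x1 y1 where at1: "m \<le> ?ph a x1 y1" using exists_cell_phase_ge[OF pw m[OF a]] .
  have "periodic N (\<lambda>i j. kdelta N x0 y0 i j - kdelta N x1 y1 i j)"
    by (intro periodic_diff periodic_kdelta)
  moreover have "gsum N (\<lambda>i j. kdelta N x0 y0 i j - kdelta N x1 y1 i j) = 0"
    unfolding gsum_diff gsum_kdelta[OF N_ge_1] by simp
  ultimately obtain V where V: "periodic N V" "\<And>i j. lap h V i j = kdelta N x0 y0 i j - kdelta N x1 y1 i j"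
    using discrete_poisson_solvable[OF h_pos N_ge_1] by blast
  let ?J = "\<lambda>s. J (\<lambda>i j. w1 i j + s * (transfer a b 1 * V i j)) (\<lambda>i j. w2 i j + s * (transfer a b 2 * V i j))"
  have deriv: "(?J has_real_derivative gsum N (\<lambda>i j. (transfer a b 1 * res1 w1 w2 i j + transfer a b 2 * res2 w1 w2 i j)
      * lap h V i j)) (at 0)"
    by (rule J_deriv_transfer[OF pw V(1) admissible_pos[OF \<delta>(1) w(1)]])
  have neg: "gsum N (\<lambda>i j. (transfer a b 1 * res1 w1 w2 i j + transfer a b 2 * res2 w1 w2 i j)
      * lap h V i j) < 0"
    using \<delta> by (intro transfer_deriv_neg[OF \<delta>(1) w a b(1) b(2)[symmetric] V at0 bx0 _ at1 margin]) simp
  obtain d where d: "d > 0" "\<And>s. 0 < s \<Longrightarrow> s < d \<Longrightarrow> ?J s < ?J 0"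
    using DERIV_neg_dec_right[OF deriv neg] by auto
  define t where "t = min d (min (1/4 - \<delta>) (m - \<delta>))"
  have "0 < t" "t \<le> d" "t \<le> 1/4 - \<delta>" "t \<le> m - \<delta>" unfolding t_def using d \<delta> by auto
  then have s: "0 < t / 2" "t / 2 < d" "\<delta> + t / 2 \<le> 1/4" "\<delta> + t / 2 \<le> m" by linarith+
  define s where "s = t / 2"
  note s = s[folded s_def]
  have "((\<lambda>i j. w1 i j + s * (transfer a b 1 * V i j)), (\<lambda>i j. w2 i j + s * (transfer a b 2 * V i j)))
      \<in> admissible \<delta>"
  proof (rule transfer_step_admissible[OF w(1) a b(1) b(2)[symmetric] V])
    show "0 \<le> s" "\<delta> + s \<le> ?ph b x0 y0" "\<delta> + s \<le> ?ph a x1 y1" "?ph a x0 y0 < ?ph a x1 y1"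
      using s bx0 at0 at1 \<delta> by linarith+
  qed
  then have "?J 0 \<le> ?J s" using min by simp
  then show False using d(2)[OF s(1,2)] by simp
qed

lemma minimiser_critical:
  assumes "0 < \<delta>" and w: "(w1, w2) \<in> admissible \<delta>"
    and strict: "\<forall>k\<in>{1,2,3}. \<forall>i j. \<delta> < phase k (phi1 w1) (phi2 w2) i j"
    and min: "\<And>v1 v2. (v1, v2) \<in> admissible \<delta> \<Longrightarrow> J w1 w2 \<le> J v1 v2"
    and a: "a \<in> {1, 2}"
  shows "transfer a 3 1 * lap h (res1 w1 w2) x y + transfer a 3 2 * lap h (res2 w1 w2) x y = 0"
proof -
  let ?ph = "\<lambda>k. phase k (phi1 w1) (phi2 w2)"
  have pw: "periodic N w1" "periodic N w2" using w unfolding admissible_iff by auto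
  have "periodic N (?ph k)" if "k \<in> {1,2,3}" for k using pw by (intro periodic_phase periodic_phi)
  moreover have "\<delta> < ?ph k i j" if "k \<in> {1,2,3}" for k i j using strict that by blast
  ultimately obtain e where e: "e > 0" "\<And>k i j. k \<in> {1,2,3} \<Longrightarrow> \<delta> + e \<le> ?ph k i j"
    using exists_uniform_margin[OF N_ge_1, of ?ph \<delta>] by blast
  have ab: "a \<in> {1,2,3}" "3 \<in> {1,2,3::nat}" "a \<noteq> 3" using a by auto
  let ?V = "kdelta N x y"
  have lapV: "\<bar>lap h ?V i j\<bar> \<le> 8 / h\<^sup>2" for i j
    using abs_lap_le[of ?V 1, OF _ h_pos] by (simp add: kdelta_def)
  let ?R = "\<lambda>i j. transfer a 3 1 * res1 w1 w2 i j + transfer a 3 2 * res2 w1 w2 i j"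
  let ?J = "\<lambda>s. J (\<lambda>i j. w1 i j + s * (transfer a 3 1 * ?V i j)) (\<lambda>i j. w2 i j + s * (transfer a 3 2 * ?V i j))"
  have deriv: "(?J has_real_derivative gsum N (\<lambda>i j. ?R i j * lap h ?V i j)) (at 0)"
    by (rule J_deriv_transfer[OF pw periodic_kdelta admissible_pos[OF assms(1) w]])
  have "\<exists>r>0. \<forall>s. \<bar>0 - s\<bar> < r \<longrightarrow> ?J 0 \<le> ?J s"
  proof (intro exI[of _ "e * h\<^sup>2 / 8"] conjI allI impI)
    show "0 < e * h\<^sup>2 / 8" using e(1) h_pos by simp
    fix s assume "\<bar>0 - s\<bar> < e * h\<^sup>2 / 8"
    then have "\<bar>s\<bar> * \<bar>lap h ?V i j\<bar> \<le> (e * h\<^sup>2 / 8) * (8 / h\<^sup>2)" for i j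
      using lapV[of i j] by (intro mult_mono) simp_all
    then have "\<bar>s\<bar> * \<bar>lap h ?V i j\<bar> \<le> e" for i j using h_pos by simp
    then have "((\<lambda>i j. w1 i j + s * (transfer a 3 1 * ?V i j)), (\<lambda>i j. w2 i j + s * (transfer a 3 2 * ?V i j)))
        \<in> admissible \<delta>"
      by (intro small_transfer_admissible[OF w ab periodic_kdelta e(2)])
    then show "?J 0 \<le> ?J s" using min by simp
  qed
  then have "gsum N (\<lambda>i j. ?R i j * lap h ?V i j) = 0" using DERIV_local_min[OF deriv] by blast
  moreover have pR: "periodic N ?R" using periodic_res[OF pw] by (intro periodic_add periodic_cmult)
  then have "gsum N (\<lambda>i j. ?R i j * lap h ?V i j) = lap h ?R x y"
    using gsum_lap_symmetric[OF pR periodic_kdelta, of h] gsum_mult_kdelta[OF N_ge_1 periodic_lap[OF pR]]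
    by simp
  ultimately show ?thesis using lap_add_scaled[of h "\<lambda>i j. transfer a 3 1 * res1 w1 w2 i j" "transfer a 3 2"
      "res2 w1 w2"] by (simp add: lap_cmult)
qed

section \<open>Existence, uniqueness and conservation of mass\<close>

lemma critical_point_solves_scheme:
  assumes "\<And>i j. lap h (res1 w1 w2) i j = 0" "\<And>i j. lap h (res2 w1 w2) i j = 0"
  shows "bdf2_step P h dt A1 A2 p1o p2o p1c p2c (phi1 w1) (phi2 w2)"
  unfolding bdf2_step_iff
proof (intro conjI allI)
  fix i j
  have "lap h (mu1 (phi1 w1) (phi2 w2)) i j = c1 * lap h w1 i j - g1 i j"
    "lap h (mu2 (phi1 w1) (phi2 w2)) i j = c2 * lap h w2 i j - g2 i j"
    using assms lap_res[of w1 w2 i j] by simp_all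
  then show "(3 * phi1 w1 i j - 4 * p1c i j + p1o i j) / (2 * dt) = mob1 P * lap h (mu1 (phi1 w1) (phi2 w2)) i j"
    "(3 * phi2 w2 i j - 4 * p2c i j + p2o i j) / (2 * dt) = mob2 P * lap h (mu2 (phi1 w1) (phi2 w2)) i j"
    unfolding phi1_def phi2_def c1_def c2_def g1_def g2_def using mob_pos dt_pos by (simp_all add: field_simps)
qed

lemma exists_solution: "\<exists>q1 q2. inGibbs N q1 q2 \<and> bdf2_step P h dt A1 A2 p1o p2o p1c p2c q1 q2"
proof -
  have "periodic N (phase k p1c p2c)" "0 < phase k p1c p2c i j" if "k \<in> {1,2,3}" for k i j
    using Gibbs_cur that unfolding inGibbs_iff_phase by (auto intro: periodic_phase)
  then have "\<exists>m>0. \<forall>k\<in>{1,2,3}. \<forall>i j. 0 + m \<le> phase k p1c p2c i j"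
    by (intro exists_uniform_margin[OF N_ge_1])
  then obtain m where "m > 0" and "\<forall>k\<in>{1,2,3}. \<forall>i j. m \<le> phase k p1c p2c i j"
    by auto
  then have m: "\<And>k i j. k \<in> {1,2,3} \<Longrightarrow> m \<le> phase k p1c p2c i j" by blast
  obtain \<delta> where \<delta>: "0 < \<delta>" "\<delta> \<le> 1/8" "\<delta> < m"
    and margin: "\<And>a b. log_coef a * (ln \<delta> - ln m) + log_coef b * ln 4 + 4 * rest_bound < 0"
    using exists_small_log_margin[where c=log_coef and B="4 * rest_bound", OF log_coef_bounds \<open>m > 0\<close>]
    by blast
  have "((\<lambda>i j. 0), (\<lambda>i j. 0)) \<in> admissible \<delta>"
    unfolding zero_admissible_iff using m \<delta>(3) by (meson less_imp_le order_trans)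
  then obtain w1 w2 where w: "(w1, w2) \<in> admissible \<delta>" and min: "\<And>v1 v2. (v1, v2) \<in> admissible \<delta> \<Longrightarrow> J w1 w2 \<le> J v1 v2"
    and bounded: "\<And>i j. \<bar>w1 i j\<bar> \<le> box_radius" "\<And>i j. \<bar>w2 i j\<bar> \<le> box_radius"
    using J_attains_min[OF \<delta>(1)] by blast
  have strict: "\<forall>k\<in>{1,2,3}. \<forall>i j. \<delta> < phase k (phi1 w1) (phi2 w2) i j"
    by (rule minimiser_interior[OF \<delta> m margin w bounded min])
  have "transfer a 3 1 * lap h (res1 w1 w2) i j + transfer a 3 2 * lap h (res2 w1 w2) i j = 0"
    if "a \<in> {1, 2}" for a i j
    by (rule minimiser_critical[OF \<delta>(1) w strict min that])
  from this[of 1] this[of 2] have "lap h (res1 w1 w2) i j = 0" "lap h (res2 w1 w2) i j = 0" for i j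
    by (simp_all add: transfer_def)
  then show ?thesis
    using admissible_Gibbs[OF \<delta>(1) w] critical_point_solves_scheme by blast
qed

lemma mass_conservation:
  assumes "inGibbs N q1 q2" "bdf2_step P h dt A1 A2 p1o p2o p1c p2c q1 q2"
  shows "gsum N q1 = gsum N p1c \<and> gsum N q2 = gsum N p2c"
proof -
  have pq: "periodic N q1" "periodic N q2" using assms(1) unfolding inGibbs_def by auto
  have "gsum N (\<lambda>i j. (3 * q1 i j - 4 * p1c i j + p1o i j) / (2 * dt)) = gsum N (\<lambda>i j. mob1 P * lap h (mu1 q1 q2) i j)"
    "gsum N (\<lambda>i j. (3 * q2 i j - 4 * p2c i j + p2o i j) / (2 * dt)) = gsum N (\<lambda>i j. mob2 P * lap h (mu2 q1 q2) i j)"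
    using assms(2) unfolding bdf2_step_iff by simp_all
  then have "(3 * gsum N q1 - 4 * gsum N p1c + gsum N p1o) / (2 * dt) = 0"
    "(3 * gsum N q2 - 4 * gsum N p2c + gsum N p2o) / (2 * dt) = 0"
    using gsum_lap[OF periodic_mu(1)[OF pq]] gsum_lap[OF periodic_mu(2)[OF pq]]
    by (simp_all only: gsum_divide gsum_add gsum_diff gsum_cmult)
  then show ?thesis using mass1 mass2 dt_pos by simp
qed

lemma mu_monotone:
  assumes q: "inGibbs N q1 q2" and r: "inGibbs N r1 r2"
  shows "gsum N (\<lambda>i j. (q1 i j - r1 i j) * (dSa P (q1 i j) (q2 i j) - dSa P (r1 i j) (r2 i j))
      + (q2 i j - r2 i j) * (dSb P (q1 i j) (q2 i j) - dSb P (r1 i j) (r2 i j)))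
    \<le> gsum N (\<lambda>i j. (q1 i j - r1 i j) * (mu1 q1 q2 i j - mu1 r1 r2 i j)
      + (q2 i j - r2 i j) * (mu2 q1 q2 i j - mu2 r1 r2 i j))"
proof -
  have pq: "periodic N q1" "periodic N q2" and posq: "\<And>i j. 0 < q1 i j \<and> 0 < q2 i j \<and> q1 i j + q2 i j < 1"
    and pr: "periodic N r1" "periodic N r2" and posr: "\<And>i j. 0 < r1 i j \<and> 0 < r2 i j \<and> r1 i j + r2 i j < 1"
    using q r unfolding inGibbs_def by auto
  let ?u3 = "\<lambda>i j. 1 - q1 i j - q2 i j" and ?v3 = "\<lambda>i j. 1 - r1 i j - r2 i j"
  let ?e1 = "\<lambda>i j. q1 i j - r1 i j" and ?e2 = "\<lambda>i j. q2 i j - r2 i j"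
  let ?T = "\<lambda>u v. gsum N (\<lambda>i j. (Top h u i j - Top h v i j) * (u i j - v i j))"
  have "periodic N ?e1" "periodic N ?e2" using pq pr by (auto intro: periodic_diff)
  then have lap_e: "gsum N (\<lambda>i j. ?e1 i j * (lap h q1 i j - lap h r1 i j)) = - dirichlet N h ?e1 ?e1"
    "gsum N (\<lambda>i j. ?e2 i j * (lap h q2 i j - lap h r2 i j)) = - dirichlet N h ?e2 ?e2"
    using gsum_mult_lap[of N ?e1 ?e1 h] gsum_mult_lap[of N ?e2 ?e2 h] by (simp_all add: lap_diff)
  have "gsum N (\<lambda>i j. ?e1 i j * (mu1 q1 q2 i j - mu1 r1 r2 i j) + ?e2 i j * (mu2 q1 q2 i j - mu2 r1 r2 i j))
    = gsum N (\<lambda>i j. ?e1 i j * (dSa P (q1 i j) (q2 i j) - dSa P (r1 i j) (r2 i j))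
      + ?e2 i j * (dSb P (q1 i j) (q2 i j) - dSb P (r1 i j) (r2 i j)))
      + (eps1 P)\<^sup>2 * ?T q1 r1 + (eps2 P)\<^sup>2 * ?T q2 r2 + (eps3 P)\<^sup>2 * ?T ?u3 ?v3
      - A1 * dt * gsum N (\<lambda>i j. ?e1 i j * (lap h q1 i j - lap h r1 i j))
      - A2 * dt * gsum N (\<lambda>i j. ?e2 i j * (lap h q2 i j - lap h r2 i j))"
    unfolding gsum_linear[symmetric] mu1_def mu2_def dG1_def dG2_def lap_diff by (simp add: algebra_simps)
  moreover have "0 \<le> ?T q1 r1" "0 \<le> ?T q2 r2"
    using posq posr by (auto intro!: gsum_Top_monotone pq pr)
  moreover have "0 \<le> ?T ?u3 ?v3"
  proof (rule gsum_Top_monotone)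
    show "periodic N ?u3" "periodic N ?v3" by (intro periodic_diff periodic_const pq pr)+
    show "0 < ?u3 i j" "0 < ?v3 i j" for i j using posq[of i j] posr[of i j] by linarith+
  qed
  moreover have "0 \<le> A1 * dt * dirichlet N h ?e1 ?e1" "0 \<le> A2 * dt * dirichlet N h ?e2 ?e2"
    using A1_nonneg A2_nonneg dt_pos dirichlet_nonneg by simp_all
  ultimately show ?thesis unfolding lap_e by (simp add: mult_nonneg_nonneg add_increasing2)
qed

text \<open>Subtracting the two schemes gives \<open>q\<^sub>i - r\<^sub>i = \<kappa>\<^sub>i \<Delta>\<^sub>h W\<^sub>i\<close> with \<open>\<kappa>\<^sub>i > 0\<close> and
  \<open>W\<^sub>i = \<mu>\<^sub>i(q) - \<mu>\<^sub>i(r)\<close>, so \<open>\<langle>q\<^sub>i - r\<^sub>i, W\<^sub>i\<rangle> = - \<kappa>\<^sub>i \<parallel>\<nabla>\<^sub>h W\<^sub>i\<parallel>\<^sup>2\<close>.\<close>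

lemma scheme_diff_mult_mu_diff_nonpos:
  assumes q: "inGibbs N q1 q2" "bdf2_step P h dt A1 A2 p1o p2o p1c p2c q1 q2"
    and r: "inGibbs N r1 r2" "bdf2_step P h dt A1 A2 p1o p2o p1c p2c r1 r2"
  shows "gsum N (\<lambda>i j. (q1 i j - r1 i j) * (mu1 q1 q2 i j - mu1 r1 r2 i j)
    + (q2 i j - r2 i j) * (mu2 q1 q2 i j - mu2 r1 r2 i j)) \<le> 0"
proof -
  let ?W1 = "\<lambda>i j. mu1 q1 q2 i j - mu1 r1 r2 i j" and ?W2 = "\<lambda>i j. mu2 q1 q2 i j - mu2 r1 r2 i j"
  have pq: "periodic N q1" "periodic N q2" and pr: "periodic N r1" "periodic N r2"
    using q(1) r(1) unfolding inGibbs_def by auto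
  have pW: "periodic N ?W1" "periodic N ?W2"
    using periodic_mu[OF pq] periodic_mu[OF pr] by (auto intro: periodic_diff)
  have S: "(3 * q1 i j - 4 * p1c i j + p1o i j) / (2 * dt) = mob1 P * lap h (mu1 q1 q2) i j"
    "(3 * q2 i j - 4 * p2c i j + p2o i j) / (2 * dt) = mob2 P * lap h (mu2 q1 q2) i j"
    "(3 * r1 i j - 4 * p1c i j + p1o i j) / (2 * dt) = mob1 P * lap h (mu1 r1 r2) i j"
    "(3 * r2 i j - 4 * p2c i j + p2o i j) / (2 * dt) = mob2 P * lap h (mu2 r1 r2) i j" for i j
    using q(2) r(2) unfolding bdf2_step_iff by blast+
  have diff: "q1 i j - r1 i j = (2 * dt * mob1 P / 3) * lap h ?W1 i j"
    "q2 i j - r2 i j = (2 * dt * mob2 P / 3) * lap h ?W2 i j" for i j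
    unfolding lap_diff by (rule bdf2_difference[OF dt_pos S(1,3)] bdf2_difference[OF dt_pos S(2,4)])+
  have "gsum N (\<lambda>i j. (q1 i j - r1 i j) * ?W1 i j) = (2 * dt * mob1 P / 3) * gsum N (\<lambda>i j. ?W1 i j * lap h ?W1 i j)"
    "gsum N (\<lambda>i j. (q2 i j - r2 i j) * ?W2 i j) = (2 * dt * mob2 P / 3) * gsum N (\<lambda>i j. ?W2 i j * lap h ?W2 i j)"
    unfolding gsum_cmult[symmetric] by (rule gsum_cong, simp only: diff mult_ac)+
  then have "gsum N (\<lambda>i j. (q1 i j - r1 i j) * ?W1 i j) = - (2 * dt * mob1 P / 3) * dirichlet N h ?W1 ?W1"
    "gsum N (\<lambda>i j. (q2 i j - r2 i j) * ?W2 i j) = - (2 * dt * mob2 P / 3) * dirichlet N h ?W2 ?W2"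
    unfolding gsum_mult_lap[OF pW(1) pW(1)] gsum_mult_lap[OF pW(2) pW(2)] by simp_all
  moreover have "0 \<le> (2 * dt * mob1 P / 3) * dirichlet N h ?W1 ?W1" "0 \<le> (2 * dt * mob2 P / 3) * dirichlet N h ?W2 ?W2"
    using dt_pos mob_pos by (intro mult_nonneg_nonneg dirichlet_nonneg; simp)+
  ultimately show ?thesis unfolding gsum_add by linarith
qed

lemma scheme_solution_unique:
  assumes q: "inGibbs N q1 q2" "bdf2_step P h dt A1 A2 p1o p2o p1c p2c q1 q2"
    and r: "inGibbs N r1 r2" "bdf2_step P h dt A1 A2 p1o p2o p1c p2c r1 r2"
  shows "q1 = r1 \<and> q2 = r2"
proof -
  have pq: "periodic N q1" "periodic N q2" and posq: "\<And>i j. 0 < q1 i j \<and> 0 < q2 i j \<and> q1 i j + q2 i j < 1"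
    and pr: "periodic N r1" "periodic N r2" and posr: "\<And>i j. 0 < r1 i j \<and> 0 < r2 i j \<and> r1 i j + r2 i j < 1"
    using q(1) r(1) unfolding inGibbs_def by auto
  let ?W1 = "\<lambda>i j. mu1 q1 q2 i j - mu1 r1 r2 i j" and ?W2 = "\<lambda>i j. mu2 q1 q2 i j - mu2 r1 r2 i j"
  let ?S = "\<lambda>i j. (q1 i j - r1 i j) * (dSa P (q1 i j) (q2 i j) - dSa P (r1 i j) (r2 i j))
      + (q2 i j - r2 i j) * (dSb P (q1 i j) (q2 i j) - dSb P (r1 i j) (r2 i j))"
  have "gsum N (\<lambda>i j. (q1 i j - r1 i j) * ?W1 i j + (q2 i j - r2 i j) * ?W2 i j) \<le> 0"
    by (rule scheme_diff_mult_mu_diff_nonpos[OF q r])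
  with mu_monotone[OF q(1) r(1)] have "gsum N ?S \<le> 0" by linarith
  moreover have S_nonneg: "0 \<le> ?S i j" for i j
    using posq[of i j] posr[of i j] by (intro dS_monotone(1)[OF M0_pos N0_pos]) auto
  ultimately have "?S i j = 0" if "1 \<le> i" "i \<le> int N" "1 \<le> j" "j \<le> int N" for i j
    using member_le_gsum[of ?S, OF S_nonneg that] S_nonneg[of i j] by linarith
  then have cell: "q1 i j = r1 i j \<and> q2 i j = r2 i j" if "1 \<le> i" "i \<le> int N" "1 \<le> j" "j \<le> int N" for i j
    using posq[of i j] posr[of i j] that by (intro dS_monotone(2)[OF M0_pos N0_pos]) auto
  have "q1 i j = r1 i j \<and> q2 i j = r2 i j" for i j
    using cell[of "wrap N i" "wrap N j"] wrap_bounds[OF N_ge_1]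
    by (simp add: periodic_wrap[OF pq(1)] periodic_wrap[OF pq(2)] periodic_wrap[OF pr(1)] periodic_wrap[OF pr(2)])
  then show ?thesis by (auto intro!: ext)
qed

end

theorem theorem3p2:
  fixes P :: model and L dt A1 A2 :: real and N :: nat
    and p1o p2o p1c p2c :: grid
  assumes "valid_model P" and "L > 0" and "N \<ge> 1"
    and "dt > 0" and "A1 \<ge> 0" and "A2 \<ge> 0"
    and "inGibbs N p1o p2o" and "inGibbs N p1c p2c"
    and "gmean L N p1o = gmean L N p1c" and "gmean L N p2o = gmean L N p2c"
  shows "(\<exists>!q. inGibbs N (fst q) (snd q) \<and>
                bdf2_step P (L / real N) dt A1 A2 p1o p2o p1c p2c (fst q) (snd q))
       \<and> (\<forall>q1 q2. inGibbs N q1 q2 \<and> bdf2_step P (L / real N) dt A1 A2 p1o p2o p1c p2c q1 q2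
            \<longrightarrow> gmean L N q1 = gmean L N p1c \<and> gmean L N q2 = gmean L N p2c
              \<and> (\<forall>i j. q1 i j > 0 \<and> q2 i j > 0 \<and> q1 i j + q2 i j < 1))"
proof -
  interpret bdf2_data P N "L / real N" dt A1 A2 p1o p2o p1c p2c
    using assms by unfold_locales (auto simp: gmean_eq_iff_gsum_eq)
  obtain q1 q2 where q: "inGibbs N q1 q2" "bdf2_step P (L / real N) dt A1 A2 p1o p2o p1c p2c q1 q2"
    using exists_solution by blast
  then have "\<exists>!q. inGibbs N (fst q) (snd q) \<and> bdf2_step P (L / real N) dt A1 A2 p1o p2o p1c p2c (fst q) (snd q)"
    using scheme_solution_unique by (intro ex1I[of _ "(q1, q2)"]) (auto simp: prod_eq_iff)
  moreover have "gmean L N r1 = gmean L N p1c \<and> gmean L N r2 = gmean L N p2c"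
    if "inGibbs N r1 r2" "bdf2_step P (L / real N) dt A1 A2 p1o p2o p1c p2c r1 r2" for r1 r2
    using mass_conservation[OF that] assms(2,3) by (simp add: gmean_eq_iff_gsum_eq)
  ultimately show ?thesis unfolding inGibbs_def by blast
qed

end
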